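(* For each $n\ge1$, the number of acyclic orientations of $\Gamma_n$ equals $T_n(2,0)=T_{2,n}(2,0)+3N_n(2,0)+M_n(2,0)$, and $$T_{n+1}(2,0)=T_n(2,0)^3-2\left(T_{2,n}(2,0)+N_n(2,0)\right)^3,$$ where, writing $T_2,N,M$ for $T_{2,n}(2,0),N_n(2,0),M_n(2,0)$, $$T_{2,n+1}(2,0)=-T_2^3+6T_2^2N+3T_2N^2,$$ $$N_{n+1}(2,0)=-T_2^2N+T_2^2M+7T_2N^2+2T_2NM+4N^3+N^2M,$$ $$M_{n+1}(2,0)=-3T_2N^2+12T_2NM+3T_2M^2+13N^3+24N^2M+9NM^2+M^3,$$ with $T_{2,1}(2,0)=2$, $N_1(2,0)=M_1(2,0)=1$.
   Context: Graphs are finite; multiple edges are allowed. For a graph $G$, a spanning subgraph $A$ has vertex set $V(G)$ and edge set $E(A)\subseteq E(G)$; $k(A)$ is its number of components, $r(A)=|V(G)|-k(A)$, $n(A)=|E(A)|-r(A)$; the weight of $A$ is $(x-1)^{r(G)-r(A)}(y-1)^{n(A)}$ and the Tutte polynomial $T(G;x,y)$ is the sum of the weights of all spanning subgraphs. Sierpiński graphs $\Gamma_n$ ($n\ge1$), each with three outmost vertices top, left, right: $\Gamma_1$ is the triangle $K_3$; $\Gamma_{n+1}$ is obtained from three disjoint copies $G_1,G_2,G_3$ of $\Gamma_n$ by identifying left$(G_1)$ with top$(G_2)$, right$(G_1)$ with top$(G_3)$, right$(G_2)$ with left$(G_3)$; its outmost vertices are top$(G_1)$, left$(G_2)$, right$(G_3)$.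 $T_n=T(\Gamma_n;x,y)$. $T_{2,n}$ (resp. $T_{1,n}$, $T_{0,n}$) is the sum of the weights of the spanning subgraphs of $\Gamma_n$ in which the three outmost vertices lie in one component (resp. left and right outmost in one component, top in another; resp. the three in three distinct components). $N_n(x,y)=T_{1,n}/(x-1)$ and $M_n(x,y)=T_{0,n}/(x-1)^2$, which are polynomials. An acyclic orientation is an orientation of all edges with no directed cycle. *)

theory Defs
  imports Complex_Main
begin

text \<open>Edge i (for i < length (edges G)) joins fst (edges G ! i) and snd (edges G ! i);
  edges are identified by their index, so multiple edges are allowed.\<close>

record sgraph =
  verts :: "nat set"
  edges :: "(nat \<times> nat) list"
  topv :: nat
  leftv :: nat
  rightv :: nat

definition edge_ids :: "sgraph \<Rightarrow> nat set" where
  "edge_ids G = {..<length (edges G)}"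

definition triangle :: sgraph where
  "triangle = \<lparr>verts = {0,1,2}, edges = [(0,1),(0,2),(1,2)],
               topv = 0, leftv = 1, rightv = 2\<rparr>"

text \<open>Copy j (j = 0,1,2) of G uses vertex 3*v+j for vertex v of G. Then
  left(G1) is identified with top(G2), right(G1) with top(G3), right(G2) with left(G3).\<close>

definition copyv :: "nat \<Rightarrow> nat \<Rightarrow> nat" where
  "copyv j v = 3 * v + j"

definition identify :: "sgraph \<Rightarrow> nat \<Rightarrow> nat" where
  "identify G w =
     (if w = copyv 0 (leftv G) then copyv 1 (topv G)
      else if w = copyv 0 (rightv G) then copyv 2 (topv G)
      else if w = copyv 1 (rightv G) then copyv 2 (leftv G)
      else w)"

definition sier_step :: "sgraph \<Rightarrow> sgraph" where
  "sier_step G =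
     \<lparr>verts = identify G ` (\<Union>j\<in>{0,1,2}. copyv j ` verts G),
      edges = concat (map (\<lambda>j. map (\<lambda>(u,v). (identify G (copyv j u), identify G (copyv j v)))
                                   (edges G)) [0,1,2]),
      topv = identify G (copyv 0 (topv G)),
      leftv = identify G (copyv 1 (leftv G)),
      rightv = identify G (copyv 2 (rightv G))\<rparr>"

primrec gamma_aux :: "nat \<Rightarrow> sgraph" where
  "gamma_aux 0 = triangle"
| "gamma_aux (Suc k) = sier_step (gamma_aux k)"

text \<open>Gamma n for n \<ge> 1 (Gamma 0 is an irrelevant default).\<close>
definition Gamma :: "nat \<Rightarrow> sgraph" where
  "Gamma n = gamma_aux (n - 1)"

definition edge_rel :: "sgraph \<Rightarrow> nat set \<Rightarrow> (nat \<times> nat) set" where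
  "edge_rel G A = {(u,v). \<exists>i\<in>A. i < length (edges G) \<and>
                      (edges G ! i = (u,v) \<or> edges G ! i = (v,u))}"

definition conn :: "sgraph \<Rightarrow> nat set \<Rightarrow> (nat \<times> nat) set" where
  "conn G A = (edge_rel G A)\<^sup>*"

definition ncomp :: "sgraph \<Rightarrow> nat set \<Rightarrow> nat" where
  "ncomp G A = card ((\<lambda>v. conn G A `` {v}) ` verts G)"

definition rk :: "sgraph \<Rightarrow> nat set \<Rightarrow> nat" where
  "rk G A = card (verts G) - ncomp G A"

definition nul :: "sgraph \<Rightarrow> nat set \<Rightarrow> nat" where
  "nul G A = card A - rk G A"

definition tweight :: "sgraph \<Rightarrow> real \<Rightarrow> real \<Rightarrow> nat set \<Rightarrow> real" where
  "tweight G x y A = (x - 1) ^ (rk G (edge_ids G) - rk G A) * (y - 1) ^ (nul G A)"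

definition tutte :: "sgraph \<Rightarrow> real \<Rightarrow> real \<Rightarrow> real" where
  "tutte G x y = (\<Sum>A\<in>Pow (edge_ids G). tweight G x y A)"

definition tutte2 :: "sgraph \<Rightarrow> real \<Rightarrow> real \<Rightarrow> real" where
  "tutte2 G x y = (\<Sum>A\<in>{A\<in>Pow (edge_ids G).
       (topv G, leftv G) \<in> conn G A \<and> (topv G, rightv G) \<in> conn G A}. tweight G x y A)"

definition tutte1 :: "sgraph \<Rightarrow> real \<Rightarrow> real \<Rightarrow> real" where
  "tutte1 G x y = (\<Sum>A\<in>{A\<in>Pow (edge_ids G).
       (leftv G, rightv G) \<in> conn G A \<and> (topv G, leftv G) \<notin> conn G A}. tweight G x y A)"

definition tutte0 :: "sgraph \<Rightarrow> real \<Rightarrow> real \<Rightarrow> real" where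
  "tutte0 G x y = (\<Sum>A\<in>{A\<in>Pow (edge_ids G).
       (topv G, leftv G) \<notin> conn G A \<and> (topv G, rightv G) \<notin> conn G A
       \<and> (leftv G, rightv G) \<notin> conn G A}. tweight G x y A)"

definition NN :: "sgraph \<Rightarrow> real \<Rightarrow> real \<Rightarrow> real" where
  "NN G x y = tutte1 G x y / (x - 1)"

definition MM :: "sgraph \<Rightarrow> real \<Rightarrow> real \<Rightarrow> real" where
  "MM G x y = tutte0 G x y / (x - 1) ^ 2"

text \<open>Orientations: S is the set of edges oriented from snd to fst (the others from fst to snd).\<close>
definition arcs :: "sgraph \<Rightarrow> nat set \<Rightarrow> (nat \<times> nat) set" where
  "arcs G S = {(u,v). \<exists>i<length (edges G).
       (i \<notin> S \<and> edges G ! i = (u,v)) \<or> (i \<in> S \<and> edges G ! i = (v,u))}"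

definition acyclic_orientations :: "sgraph \<Rightarrow> nat set set" where
  "acyclic_orientations G = {S\<in>Pow (edge_ids G). acyclic (arcs G S)}"

end

theory Submission
  imports Defs
begin

text \<open>(1) Stanley's theorem: for every finite multigraph the number of acyclic orientations equals
  T(2,0) = sum over spanning subgraphs A of (-1)^n(A). Both sides satisfy the same
  deletion-contraction recursion: the acyclic orientations of G are those of G - e admitting
  either direction of e, and the orientations admitting both are those of G / e.

  (2) Spanning subgraphs are sorted by the partition they induce on the three outmost vertices
  (five types); type_sum G t is the part of T(G;2,0) coming from subgraphs of type t. T_2, N, M
  at (2,0) are the type sums for three of these types, and T(2,0) is the sum of all five.

  (3) A spanning subgraph of Gamma_(n+1) is a triple of spanning subgraphs of the three copies of
  Gamma_n. Its type is a function glue_type of the three types, and its nullity is the sum of the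
  three nullities, plus one exactly when the gluing closes the inner triangle. So the type sums
  of Gamma_(n+1) are cubic expressions glue_sums in those of Gamma_n (locale sierpinski_step).

  (4) By induction from the triangle, the type sums of Gamma_n are symmetric in the three outmost
  vertices; under this symmetry glue_sums evaluates to the recursion of the statement.\<close>

lemma card_image_eq_if_same_kernel:
  assumes "\<And>a b. a \<in> X \<Longrightarrow> b \<in> X \<Longrightarrow> h a = h b \<longleftrightarrow> g a = g b"
  shows "card (h ` X) = card (g ` X)"
proof -
  let ?P = "(\<lambda>x. (h x, g x)) ` X"
  have "inj_on fst ?P" "inj_on snd ?P" using assms by (auto simp: inj_on_def)
  moreover have "fst ` ?P = h ` X" "snd ` ?P = g ` X" by (auto simp: image_image)
  ultimately show ?thesis by (metis card_image)
qed

lemma sym_rtrancl_class_eq_iff: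
  assumes "sym R"
  shows "R\<^sup>* `` {a} = R\<^sup>* `` {b} \<longleftrightarrow> (a, b) \<in> R\<^sup>*"
proof
  assume "R\<^sup>* `` {a} = R\<^sup>* `` {b}"
  then show "(a, b) \<in> R\<^sup>*" by auto
next
  assume ab: "(a, b) \<in> R\<^sup>*"
  then have "(b, a) \<in> R\<^sup>*" using sym_rtrancl[OF assms] by (auto dest: symD)
  with ab show "R\<^sup>* `` {a} = R\<^sup>* `` {b}" by (auto intro: rtrancl_trans)
qed

text \<open>Adding the undirected edge {x,y} to a symmetric relation: a new path uses it once.\<close>
lemma rtrancl_Un_sym_pair:
  assumes "sym R"
  shows "(R \<union> {(x,y),(y,x)})\<^sup>* =
    R\<^sup>* \<union> {(a,b). ((a,x) \<in> R\<^sup>* \<and> (y,b) \<in> R\<^sup>*) \<or> ((a,y) \<in> R\<^sup>* \<and> (x,b) \<in> R\<^sup>*)}"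
  (is "?L = ?R")
proof
  have sy: "(p,q) \<in> R\<^sup>* \<Longrightarrow> (q,p) \<in> R\<^sup>*" for p q
    using sym_rtrancl[OF assms] by (auto dest: symD)
  show "?L \<subseteq> ?R"
  proof (rule subrelI)
    fix a b assume "(a,b) \<in> ?L"
    then show "(a,b) \<in> ?R"
    proof (induction rule: rtrancl_induct)
      case (step c d)
      then consider "(c,d) \<in> R" | "(c,d) = (x,y)" | "(c,d) = (y,x)" by auto
      then show ?case
        using step.IH sy by cases (auto intro: rtrancl_into_rtrancl rtrancl_trans)
    qed simp
  qed
next
  have "R\<^sup>* \<subseteq> ?L" "(x,y) \<in> ?L" "(y,x) \<in> ?L" by (auto intro: rtrancl_mono[THEN subsetD])
  then show "?R \<subseteq> ?L" by (auto intro: rtrancl_trans)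
qed

lemma card_classes_Un_sym_pair:
  assumes sR: "sym R" and fin: "finite X" and x: "x \<in> X" and y: "y \<in> X"
  shows "card ((\<lambda>w. (R \<union> {(x,y),(y,x)})\<^sup>* `` {w}) ` X)
       = card ((\<lambda>w. R\<^sup>* `` {w}) ` X) - (if (x,y) \<in> R\<^sup>* then 0 else 1)"
proof (cases "(x,y) \<in> R\<^sup>*")
  case True
  then have "(y,x) \<in> R\<^sup>*" using sym_rtrancl[OF sR] by (auto dest: symD)
  with True have "R \<union> {(x,y),(y,x)} \<subseteq> R\<^sup>*" by auto
  then have "(R \<union> {(x,y),(y,x)})\<^sup>* = R\<^sup>*"
    by (metis (no_types, lifting) Un_upper1 rtrancl_mono rtrancl_subset)
  then show ?thesis using True by simp
next
  case False
  let ?h = "\<lambda>w. R\<^sup>* `` {w}"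
  let ?g = "\<lambda>w. if ?h w = ?h y then ?h x else ?h w"
  have sR': "sym (R \<union> {(x,y),(y,x)})" using sR by (auto simp: sym_def)
  have hxy: "?h x \<noteq> ?h y" using False sym_rtrancl_class_eq_iff[OF sR] by blast
  have "card ((\<lambda>w. (R \<union> {(x,y),(y,x)})\<^sup>* `` {w}) ` X) = card (?g ` X)"
  proof (rule card_image_eq_if_same_kernel)
    fix a b
    have "(R \<union> {(x,y),(y,x)})\<^sup>* `` {a} = (R \<union> {(x,y),(y,x)})\<^sup>* `` {b}
        \<longleftrightarrow> (a,b) \<in> R\<^sup>* \<or> ((a,x) \<in> R\<^sup>* \<and> (y,b) \<in> R\<^sup>*) \<or> ((a,y) \<in> R\<^sup>* \<and> (x,b) \<in> R\<^sup>*)"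
      by (subst sym_rtrancl_class_eq_iff[OF sR'], subst rtrancl_Un_sym_pair[OF sR]) blast
    also have "\<dots> \<longleftrightarrow> ?h a = ?h b \<or> (?h a = ?h x \<and> ?h y = ?h b) \<or> (?h a = ?h y \<and> ?h x = ?h b)"
      unfolding sym_rtrancl_class_eq_iff[OF sR] ..
    also have "\<dots> \<longleftrightarrow> ?g a = ?g b" using hxy by auto
    finally show "(R \<union> {(x,y),(y,x)})\<^sup>* `` {a} = (R \<union> {(x,y),(y,x)})\<^sup>* `` {b} \<longleftrightarrow> ?g a = ?g b" .
  qed
  also have "?g ` X = ?h ` X - {?h y}"
    using x hxy by (auto simp: image_iff)
  also have "card \<dots> = card (?h ` X) - 1" using y fin by (simp add: card_Diff_singleton)
  finally show ?thesis using False by simp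
qed

lemma rtrancl_image_map_prod_iff:
  "(f a, f b) \<in> (map_prod f f ` R)\<^sup>* \<longleftrightarrow> (a,b) \<in> (R \<union> {(x,y). f x = f y})\<^sup>*"
proof
  let ?K = "R \<union> {(x,y). f x = f y}"
  assume "(f a, f b) \<in> (map_prod f f ` R)\<^sup>*"
  then have "\<forall>b'. f b' = f b \<longrightarrow> (a,b') \<in> ?K\<^sup>*"
  proof (induction rule: rtrancl_induct)
    case (step y z)
    then obtain c d where cd: "(c,d) \<in> R" "y = f c" "z = f d" by auto
    have "(a,c) \<in> ?K\<^sup>*" "(c,d) \<in> ?K\<^sup>*" using step.IH cd by auto
    moreover have "(d,b') \<in> ?K\<^sup>*" if "f b' = z" for b' using cd that by auto
    ultimately show ?case by (blast intro: rtrancl_trans)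
  qed auto
  then show "(a,b) \<in> ?K\<^sup>*" by auto
next
  assume "(a,b) \<in> (R \<union> {(x,y). f x = f y})\<^sup>*"
  then show "(f a, f b) \<in> (map_prod f f ` R)\<^sup>*"
  proof (induction rule: rtrancl_induct)
    case (step y z)
    then show ?case
      by (cases "(y,z) \<in> R") (auto intro: rtrancl_into_rtrancl)
  qed simp
qed

lemma trancl_map_prod_image:
  "(x,y) \<in> R\<^sup>+ \<Longrightarrow> (f x, f y) \<in> (map_prod f f ` R)\<^sup>+"
  by (induction rule: trancl_induct) (force intro: trancl_into_trancl)+

lemma rtrancl_map_prod_image:
  "(x,y) \<in> R\<^sup>* \<Longrightarrow> (f x, f y) \<in> (map_prod f f ` R)\<^sup>*"
  by (induction rule: rtrancl_induct) (force intro: rtrancl_into_rtrancl)+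

definition adj :: "('e \<Rightarrow> 'v \<times> 'v) \<Rightarrow> 'e set \<Rightarrow> 'v rel" where
  "adj ends A = {(a,b). \<exists>i\<in>A. ends i = (a,b) \<or> ends i = (b,a)}"

definition ncomps :: "'v set \<Rightarrow> ('e \<Rightarrow> 'v \<times> 'v) \<Rightarrow> 'e set \<Rightarrow> nat" where
  "ncomps V ends A = card ((\<lambda>v. (adj ends A)\<^sup>* `` {v}) ` V)"

definition nullity :: "'v set \<Rightarrow> ('e \<Rightarrow> 'v \<times> 'v) \<Rightarrow> 'e set \<Rightarrow> nat" where
  "nullity V ends A = card A - (card V - ncomps V ends A)"

text \<open>The Tutte polynomial at (2,0): the weight (x-1)^(r(G)-r(A)) (y-1)^n(A) becomes (-1)^n(A).\<close>
definition tutte_2_0 :: "'v set \<Rightarrow> 'e set \<Rightarrow> ('e \<Rightarrow> 'v \<times> 'v) \<Rightarrow> real" where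
  "tutte_2_0 V I ends = (\<Sum>A\<in>Pow I. (-1) ^ nullity V ends A)"

definition orient :: "'e set \<Rightarrow> ('e \<Rightarrow> 'v \<times> 'v) \<Rightarrow> 'e set \<Rightarrow> 'v rel" where
  "orient I ends S = {(a,b). \<exists>i\<in>I. (i \<notin> S \<and> ends i = (a,b)) \<or> (i \<in> S \<and> ends i = (b,a))}"

definition acyc_orients :: "'e set \<Rightarrow> ('e \<Rightarrow> 'v \<times> 'v) \<Rightarrow> 'e set set" where
  "acyc_orients I ends = {S\<in>Pow I. acyclic (orient I ends S)}"

text \<open>Contraction of an edge uv merges v into u.\<close>
definition merge :: "'v \<Rightarrow> 'v \<Rightarrow> 'v \<Rightarrow> 'v" where
  "merge v u w = (if w = v then u else w)"

lemma sym_adj: "sym (adj ends A)"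
  by (auto simp: adj_def sym_def)

lemma adj_cong: "(\<And>i. i \<in> A \<Longrightarrow> ends i = ends' i) \<Longrightarrow> adj ends A = adj ends' A"
  by (auto simp: adj_def)

lemma adj_insert: "ends e = (u,v) \<Longrightarrow> adj ends (insert e A) = adj ends A \<union> {(u,v),(v,u)}"
  by (auto simp: adj_def)

lemma adj_map_ends: "adj (\<lambda>i. map_prod f f (ends i)) A = map_prod f f ` adj ends A"
proof
  show "map_prod f f ` adj ends A \<subseteq> adj (\<lambda>i. map_prod f f (ends i)) A"
    by (force simp: adj_def)
  show "adj (\<lambda>i. map_prod f f (ends i)) A \<subseteq> map_prod f f ` adj ends A"
  proof (rule subrelI)
    fix x y assume "(x,y) \<in> adj (\<lambda>i. map_prod f f (ends i)) A"
    then obtain i where i: "i \<in> A"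
      "map_prod f f (ends i) = (x,y) \<or> map_prod f f (ends i) = (y,x)" by (auto simp: adj_def)
    moreover obtain a b where "ends i = (a,b)" by fastforce
    ultimately show "(x,y) \<in> map_prod f f ` adj ends A" by (force simp: adj_def)
  qed
qed

lemma ncomps_le: "finite V \<Longrightarrow> ncomps V ends A \<le> card V"
  by (simp add: ncomps_def card_image_le)

lemma ncomps_insert:
  assumes "finite V" "ends e = (u,v)" "u \<in> V" "v \<in> V"
  shows "ncomps V ends (insert e A) = ncomps V ends A - (if (u,v) \<in> (adj ends A)\<^sup>* then 0 else 1)"
  unfolding ncomps_def adj_insert[of ends e u v, OF assms(2)]
  by (rule card_classes_Un_sym_pair[OF sym_adj assms(1,3,4)])

text \<open>The rank r(A) = |V| - k(A) never exceeds |A|, so the nullity is a genuine difference.\<close>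
lemma rank_le_card:
  assumes "finite A" "finite V" "\<And>i. i \<in> A \<Longrightarrow> fst (ends i) \<in> V \<and> snd (ends i) \<in> V"
  shows "card V - ncomps V ends A \<le> card A"
  using assms
proof (induction A rule: finite_induct)
  case empty
  have "(adj ends {})\<^sup>* `` {v} = {v}" for v by (simp add: adj_def)
  then have "ncomps V ends {} = card V"
    by (simp add: ncomps_def card_image inj_on_def)
  then show ?case by simp
next
  case (insert e A)
  obtain u v where uv: "ends e = (u,v)" by fastforce
  with insert.prems have "u \<in> V" "v \<in> V" by (metis fst_conv snd_conv insertI1)+
  with ncomps_insert[of V ends e u v, OF insert.prems(1) uv] have "ncomps V ends A - 1 \<le> ncomps V ends (insert e A)"
    by simp
  with insert show ?case by simp
qed

lemma ncomps_contract:
  assumes uv: "u \<noteq> v" "u \<in> V" "v \<in> V" and e: "ends e = (u,v)"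
  shows "ncomps (V - {v}) (\<lambda>i. map_prod (merge v u) (merge v u) (ends i)) A = ncomps V ends (insert e A)"
proof -
  let ?R2 = "adj ends (insert e A)"
  let ?R' = "adj (\<lambda>i. map_prod (merge v u) (merge v u) (ends i)) A"
  have same_kernel: "?R'\<^sup>* `` {a} = ?R'\<^sup>* `` {b} \<longleftrightarrow> ?R2\<^sup>* `` {a} = ?R2\<^sup>* `` {b}"
    if "a \<in> V - {v}" "b \<in> V - {v}" for a b
  proof -
    have "{(x,y). merge v u x = merge v u y} = Id \<union> {(u,v),(v,u)}"
      using uv(1) by (auto simp: merge_def split: if_splits)
    then have "adj ends A \<union> {(x,y). merge v u x = merge v u y} = ?R2\<^sup>="
      using adj_insert[of ends e u v, OF e] by auto
    then have kernel: "(adj ends A \<union> {(x,y). merge v u x = merge v u y})\<^sup>* = ?R2\<^sup>*"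
      by simp
    have "merge v u a = a" "merge v u b = b" using that by (auto simp: merge_def)
    then have "(a,b) \<in> ?R'\<^sup>* \<longleftrightarrow> (merge v u a, merge v u b) \<in> (map_prod (merge v u) (merge v u) ` adj ends A)\<^sup>*"
      by (simp add: adj_map_ends)
    also have "\<dots> \<longleftrightarrow> (a,b) \<in> ?R2\<^sup>*"
      unfolding rtrancl_image_map_prod_iff kernel ..
    finally show ?thesis unfolding sym_rtrancl_class_eq_iff[OF sym_adj] .
  qed
  have "(v,u) \<in> ?R2\<^sup>*" using adj_insert[of ends e u v, OF e] by auto
  then have "?R2\<^sup>* `` {v} \<in> (\<lambda>w. ?R2\<^sup>* `` {w}) ` (V - {v})"
    using uv by (auto simp: sym_rtrancl_class_eq_iff[OF sym_adj])
  then have "(\<lambda>w. ?R2\<^sup>* `` {w}) ` (V - {v}) = (\<lambda>w. ?R2\<^sup>* `` {w}) ` V"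
    by (metis image_insert insert_Diff insert_absorb uv(3))
  moreover have "card ((\<lambda>w. ?R'\<^sup>* `` {w}) ` (V - {v})) = card ((\<lambda>w. ?R2\<^sup>* `` {w}) ` (V - {v}))"
    by (rule card_image_eq_if_same_kernel) (rule same_kernel)
  ultimately show ?thesis unfolding ncomps_def by simp
qed

text \<open>For the hard direction a path after merging is lifted to R: it is
  an R-path, or a detour, an R-path into {u,v} followed by an R-path out of {u,v}.\<close>

definition detour :: "'v \<Rightarrow> 'v \<Rightarrow> 'v rel \<Rightarrow> 'v \<Rightarrow> 'v \<Rightarrow> bool" where
  "detour u v R a b \<longleftrightarrow> (\<exists>c\<in>{u,v}. \<exists>d\<in>{u,v}. (a,c) \<in> R\<^sup>* \<and> (d,b) \<in> R\<^sup>* \<and> ((a,c) \<in> R\<^sup>+ \<or> (d,b) \<in> R\<^sup>+))"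

lemma trancl_merge_lift:
  assumes "(x,y) \<in> (map_prod (merge v u) (merge v u) ` R)\<^sup>+"
  shows "\<exists>a b. merge v u a = x \<and> merge v u b = y \<and> ((a,b) \<in> R\<^sup>+ \<or> detour u v R a b)"
  using assms
proof (induction rule: trancl_induct)
  case (base y)
  then show ?case by fastforce
next
  case (step y z)
  let ?m = "merge v u"
  from step.hyps(2) obtain c' d' where cd: "(c',d') \<in> R" "y = ?m c'" "z = ?m d'" by auto
  from step.IH obtain a b where ab: "?m a = x" "?m b = y" and path: "(a,b) \<in> R\<^sup>+ \<or> detour u v R a b"
    by blast
  have "?m b = ?m c'" using ab cd by simp
  then have joint: "b = c' \<or> (b \<in> {u,v} \<and> c' \<in> {u,v})" by (auto simp: merge_def split: if_splits)
  have "(a,d') \<in> R\<^sup>+ \<or> detour u v R a d'"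
    using path
  proof
    assume abR: "(a,b) \<in> R\<^sup>+"
    from joint show ?thesis
    proof
      assume "b = c'"
      then show ?thesis using abR cd by (meson trancl.trancl_into_trancl)
    next
      assume "b \<in> {u,v} \<and> c' \<in> {u,v}"
      then show ?thesis using cd abR unfolding detour_def by (metis r_into_rtrancl trancl_into_rtrancl)
    qed
  next
    assume "detour u v R a b"
    then obtain c d where c: "c \<in> {u,v}" "d \<in> {u,v}" "(a,c) \<in> R\<^sup>*" "(d,b) \<in> R\<^sup>*"
      unfolding detour_def by blast
    from joint show ?thesis
    proof
      assume "b = c'"
      then have "(d,d') \<in> R\<^sup>+" using c cd by (meson rtrancl_into_trancl1)
      then show ?thesis using c unfolding detour_def by (metis trancl_into_rtrancl)
    next
      assume "b \<in> {u,v} \<and> c' \<in> {u,v}"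
      then show ?thesis using cd c unfolding detour_def by (metis r_into_rtrancl r_into_trancl)
    qed
  qed
  then show ?case using ab cd by blast
qed

lemma acyclic_merge:
  assumes acyc: "acyclic R" and unreachable: "(u,v) \<notin> R\<^sup>*" "(v,u) \<notin> R\<^sup>*"
  shows "acyclic (map_prod (merge v u) (merge v u) ` R)"
  unfolding acyclic_def
proof (intro allI notI)
  let ?m = "merge v u"
  have distinct_unreachable: "(p,q) \<notin> R\<^sup>*" if "p \<in> {u,v}" "q \<in> {u,v}" "p \<noteq> q" for p q
    using unreachable that by auto
  have no_cycle: "(p,p) \<notin> R\<^sup>+" for p using acyc unfolding acyclic_def by auto
  fix x assume "(x,x) \<in> (map_prod ?m ?m ` R)\<^sup>+"
  from trancl_merge_lift[OF this] obtain a b where ab: "?m a = x" "?m b = x"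
    and path: "(a,b) \<in> R\<^sup>+ \<or> detour u v R a b" by blast
  have same: "a = b \<or> (a \<in> {u,v} \<and> b \<in> {u,v} \<and> a \<noteq> b)"
    using ab by (auto simp: merge_def split: if_splits)
  from path show False
  proof
    assume "(a,b) \<in> R\<^sup>+"
    then show False using same no_cycle distinct_unreachable by (metis trancl_into_rtrancl)
  next
    assume "detour u v R a b"
    then obtain c d where c: "c \<in> {u,v}" "d \<in> {u,v}" "(a,c) \<in> R\<^sup>*" "(d,b) \<in> R\<^sup>*"
      and nonempty: "(a,c) \<in> R\<^sup>+ \<or> (d,b) \<in> R\<^sup>+" unfolding detour_def by blast
    from same show False
    proof
      assume "a = b"
      then have "(d,c) \<in> R\<^sup>+" using c nonempty
        by (meson rtrancl_trancl_trancl trancl_rtrancl_trancl)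
      then show False using c no_cycle distinct_unreachable by (metis trancl_into_rtrancl)
    next
      assume "a \<in> {u,v} \<and> b \<in> {u,v} \<and> a \<noteq> b"
      then have "a = c" "d = b" using distinct_unreachable c by blast+
      then show False using nonempty no_cycle by blast
    qed
  qed
qed

lemma acyclic_merge_iff:
  assumes uv: "u \<noteq> v"
  shows "acyclic (map_prod (merge v u) (merge v u) ` R) \<longleftrightarrow> acyclic R \<and> (u,v) \<notin> R\<^sup>* \<and> (v,u) \<notin> R\<^sup>*"
proof
  let ?m = "merge v u"
  assume acyc: "acyclic (map_prod ?m ?m ` R)"
  have "(p, q) \<notin> R\<^sup>+" if "?m p = ?m q" for p q
    using trancl_map_prod_image[of p q R ?m] acyc that unfolding acyclic_def by metis
  moreover have "?m u = ?m v" by (simp add: merge_def)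
  ultimately show "acyclic R \<and> (u,v) \<notin> R\<^sup>* \<and> (v,u) \<notin> R\<^sup>*"
    using uv unfolding acyclic_def by (metis rtranclD)
next
  assume "acyclic R \<and> (u,v) \<notin> R\<^sup>* \<and> (v,u) \<notin> R\<^sup>*"
  then show "acyclic (map_prod (merge v u) (merge v u) ` R)" by (simp add: acyclic_merge)
qed

lemma orient_map_ends: "orient I (\<lambda>i. map_prod f f (ends i)) S = map_prod f f ` orient I ends S"
proof
  show "map_prod f f ` orient I ends S \<subseteq> orient I (\<lambda>i. map_prod f f (ends i)) S"
    by (force simp: orient_def)
  show "orient I (\<lambda>i. map_prod f f (ends i)) S \<subseteq> map_prod f f ` orient I ends S"
  proof (rule subrelI)
    fix x y assume "(x,y) \<in> orient I (\<lambda>i. map_prod f f (ends i)) S"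
    then obtain i where i: "i \<in> I"
      "(i \<notin> S \<and> map_prod f f (ends i) = (x,y)) \<or> (i \<in> S \<and> map_prod f f (ends i) = (y,x))"
      by (auto simp: orient_def)
    moreover obtain a b where "ends i = (a,b)" by fastforce
    ultimately consider "i \<notin> S" "x = f a" "y = f b" | "i \<in> S" "x = f b" "y = f a" by auto
    then show "(x,y) \<in> map_prod f f ` orient I ends S"
    proof cases
      case 1
      then have "(a,b) \<in> orient I ends S" using i \<open>ends i = (a,b)\<close> by (auto simp: orient_def)
      then show ?thesis using 1 by force
    next
      case 2
      then have "(b,a) \<in> orient I ends S" using i \<open>ends i = (a,b)\<close> by (auto simp: orient_def)
      then show ?thesis using 2 by force
    qed
  qed
qed

lemma inj_on_insert_Pow: "e \<notin> I \<Longrightarrow> inj_on (insert e) (Pow I)"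
  by (intro inj_onI) (metis PowD insert_ident subsetD)

lemma sum_Pow_insert:
  assumes "finite I" "e \<notin> I"
  shows "(\<Sum>A\<in>Pow (insert e I). F A) = (\<Sum>A\<in>Pow I. F A) + (\<Sum>A\<in>Pow I. F (insert e A))"
proof -
  have "Pow I \<inter> insert e ` Pow I = {}" using assms(2) by auto
  then show ?thesis using assms inj_on_insert_Pow[OF assms(2)]
    by (simp add: Pow_insert sum.union_disjoint sum.reindex)
qed

lemma acyc_orients_insert_iff:
  assumes e: "e \<notin> I" "ends e = (u,v)" and S: "e \<notin> S"
  shows "S \<in> acyc_orients (insert e I) ends \<longleftrightarrow> S \<subseteq> I \<and> acyclic (insert (u,v) (orient I ends S))"
    and "insert e S \<in> acyc_orients (insert e I) ends
      \<longleftrightarrow> S \<subseteq> I \<and> acyclic (insert (v,u) (orient I ends S))"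
proof -
  have "S \<subseteq> insert e I \<longleftrightarrow> S \<subseteq> I" using S by blast
  moreover have "S \<subseteq> I \<Longrightarrow> orient (insert e I) ends S = insert (u,v) (orient I ends S)"
    and "S \<subseteq> I \<Longrightarrow> orient (insert e I) ends (insert e S) = insert (v,u) (orient I ends S)"
    using e by (auto simp: orient_def)
  ultimately show "S \<in> acyc_orients (insert e I) ends \<longleftrightarrow> S \<subseteq> I \<and> acyclic (insert (u,v) (orient I ends S))"
    and "insert e S \<in> acyc_orients (insert e I) ends
      \<longleftrightarrow> S \<subseteq> I \<and> acyclic (insert (v,u) (orient I ends S))"
    by (auto simp: acyc_orients_def)
qed

lemma card_acyc_orients_insert:
  assumes fin: "finite I" and e: "e \<notin> I" "ends e = (u,v)"
  shows "card (acyc_orients (insert e I) ends) =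
     card {S\<in>Pow I. acyclic (insert (u,v) (orient I ends S))}
   + card {S\<in>Pow I. acyclic (insert (v,u) (orient I ends S))}"
proof -
  let ?X = "{S\<in>Pow I. acyclic (insert (u,v) (orient I ends S))}"
  let ?Y = "{S\<in>Pow I. acyclic (insert (v,u) (orient I ends S))}"
  have "S \<in> acyc_orients (insert e I) ends \<longleftrightarrow> S \<in> ?X \<union> insert e ` ?Y" for S
  proof (cases "e \<in> S")
    case True
    define S0 where "S0 = S - {e}"
    have S: "S = insert e S0" "e \<notin> S0" using True by (auto simp: S0_def)
    have "x = S0" if "insert e x = insert e S0" "x \<subseteq> I" for x
      using that S(2) e(1) by (metis insert_ident subsetD)
    then have "S \<in> insert e ` ?Y \<longleftrightarrow> S0 \<in> ?Y" using S(1) by blast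
    then show ?thesis
      unfolding S(1) acyc_orients_insert_iff(2)[of e I ends u v S0, OF e S(2)] using S(2) e(1) by auto
  next
    case False
    then show ?thesis using acyc_orients_insert_iff(1)[of e I ends u v S, OF e False] by auto
  qed
  then have "acyc_orients (insert e I) ends = ?X \<union> insert e ` ?Y" by (rule set_eqI)
  moreover have "?X \<inter> insert e ` ?Y = {}" using e(1) by auto
  moreover have "inj_on (insert e) ?Y" using inj_on_insert_Pow[OF e(1)] by (rule inj_on_subset) auto
  ultimately show ?thesis using fin by (simp add: card_Un_disjoint card_image)
qed

text \<open>Deletion-contraction for acyclic orientations of a non-loop edge uv: the acyclic orientations
  of the deletion are those admitting u \<rightarrow> v or v \<rightarrow> u; those of the contraction admit both.\<close>
lemma card_acyc_orients_contract:
  assumes fin: "finite I" and e: "e \<notin> I" "ends e = (u,v)" and uv: "u \<noteq> v"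
  shows "card (acyc_orients (insert e I) ends) =
     card (acyc_orients I ends) + card (acyc_orients I (\<lambda>i. map_prod (merge v u) (merge v u) (ends i)))"
proof -
  let ?R = "orient I ends"
  let ?X = "{S\<in>Pow I. acyclic (insert (u,v) (?R S))}"
  let ?Y = "{S\<in>Pow I. acyclic (insert (v,u) (?R S))}"
  have no_both_ways: "(v,u) \<notin> (?R S)\<^sup>* \<or> (u,v) \<notin> (?R S)\<^sup>*" if "acyclic (?R S)" for S
  proof (rule ccontr)
    assume "\<not> ?thesis"
    then have "(u,v) \<in> (?R S)\<^sup>+" "(v,u) \<in> (?R S)\<^sup>*" using uv by (auto dest: rtranclD)
    then have "(u,u) \<in> (?R S)\<^sup>+" by (rule trancl_rtrancl_trancl)
    with that show False by (simp add: acyclic_def)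
  qed
  have union: "?X \<union> ?Y = acyc_orients I ends"
    using no_both_ways by (auto simp: acyc_orients_def acyclic_insert)
  have "?X \<inter> ?Y = {S\<in>Pow I. acyclic (?R S) \<and> (u,v) \<notin> (?R S)\<^sup>* \<and> (v,u) \<notin> (?R S)\<^sup>*}"
    by (auto simp: acyclic_insert)
  also have "\<dots> = acyc_orients I (\<lambda>i. map_prod (merge v u) (merge v u) (ends i))"
    unfolding acyc_orients_def orient_map_ends acyclic_merge_iff[OF uv] ..
  finally have inter: "?X \<inter> ?Y = acyc_orients I (\<lambda>i. map_prod (merge v u) (merge v u) (ends i))" .
  have "finite ?X" "finite ?Y" using fin by auto
  from card_Un_Int[OF this] show ?thesis
    unfolding card_acyc_orients_insert[of I e ends u v, OF fin e] union inter .
qed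

text \<open>Deletion and contraction for T(2,0). A loop raises the nullity of every subgraph
  containing it by one, so its two halves of the sum cancel.\<close>
lemma tutte_2_0_insert_loop:
  assumes fin: "finite I" "finite V" and e: "e \<notin> I" "ends e = (u,u)"
    and edges: "\<And>i. i \<in> I \<Longrightarrow> fst (ends i) \<in> V \<and> snd (ends i) \<in> V"
  shows "tutte_2_0 V (insert e I) ends = 0"
proof -
  have "nullity V ends (insert e A) = nullity V ends A + 1" if "A \<subseteq> I" for A
  proof -
    have "(adj ends A \<union> {(u,u)})\<^sup>= = (adj ends A)\<^sup>=" by auto
    then have "(adj ends (insert e A))\<^sup>* = (adj ends A)\<^sup>*"
      using adj_insert[of ends e u u A, OF e(2)] by (metis insert_absorb2 rtrancl_reflcl)
    moreover have "card (insert e A) = card A + 1"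
      using that fin e(1) finite_subset[of A I] by (auto simp: card_insert_if)
    moreover have "card V - ncomps V ends A \<le> card A"
      using that fin edges by (intro rank_le_card) (auto intro: finite_subset)
    ultimately show ?thesis by (simp add: nullity_def ncomps_def)
  qed
  then show ?thesis
    unfolding tutte_2_0_def sum_Pow_insert[OF fin(1) e(1)] by (simp add: sum_negf)
qed

text \<open>A non-loop edge uv: the subgraphs containing it correspond to the subgraphs of the
  contraction, with the same nullity.\<close>
lemma tutte_2_0_insert_contract:
  assumes fin: "finite I" "finite V" and e: "e \<notin> I" "ends e = (u,v)" and uv: "u \<noteq> v" "u \<in> V" "v \<in> V"
    and edges: "\<And>i. i \<in> I \<Longrightarrow> fst (ends i) \<in> V \<and> snd (ends i) \<in> V"
  shows "tutte_2_0 V (insert e I) ends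
    = tutte_2_0 V I ends + tutte_2_0 (V - {v}) I (\<lambda>i. map_prod (merge v u) (merge v u) (ends i))"
proof -
  let ?ends' = "\<lambda>i. map_prod (merge v u) (merge v u) (ends i)"
  have "nullity V ends (insert e A) = nullity (V - {v}) ?ends' A" if "A \<subseteq> I" for A
  proof -
    have "ncomps (V - {v}) ?ends' A = ncomps V ends (insert e A)"
      by (rule ncomps_contract[of u v V ends e, OF uv e(2)])
    moreover have "ncomps (V - {v}) ?ends' A \<le> card V - 1"
      using ncomps_le[of "V - {v}" ?ends' A] fin(2) uv by simp
    moreover have "card (V - {v}) - ncomps (V - {v}) ?ends' A \<le> card A"
      using that fin edges uv by (intro rank_le_card) (auto simp: merge_def intro: finite_subset)
    moreover have "card V \<ge> 1" using uv fin(2) by (auto simp: Suc_le_eq card_gt_0_iff)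
    moreover have "card (insert e A) = card A + 1"
      using that fin e(1) finite_subset[of A I] by (auto simp: card_insert_if)
    ultimately show ?thesis using uv fin(2) by (simp add: nullity_def)
  qed
  then show ?thesis
    unfolding tutte_2_0_def sum_Pow_insert[OF fin(1) e(1)] by simp
qed

text \<open>Stanley: the number of acyclic orientations of a multigraph is T(2,0), since both
  satisfy the same deletion-contraction recursion.\<close>
theorem card_acyc_orients_eq_tutte_2_0:
  assumes "finite I" "finite V" "\<And>i. i \<in> I \<Longrightarrow> fst (ends i) \<in> V \<and> snd (ends i) \<in> V"
  shows "real (card (acyc_orients I ends)) = tutte_2_0 V I ends"
  using assms
proof (induction I arbitrary: V ends rule: finite_induct)
  case empty
  have "acyc_orients {} ends = {{}}" by (auto simp: acyc_orients_def orient_def acyclic_def)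
  then show ?case by (simp add: tutte_2_0_def nullity_def)
next
  case (insert e I)
  obtain u v where uv: "ends e = (u,v)" by fastforce
  have V: "u \<in> V" "v \<in> V" using insert.prems(2)[of e] uv by auto
  have edges: "\<And>i. i \<in> I \<Longrightarrow> fst (ends i) \<in> V \<and> snd (ends i) \<in> V" using insert.prems by simp
  show ?case
  proof (cases "u = v")
    case True
    then have "(u,u) \<in> orient (insert e I) ends S" for S using uv by (auto simp: orient_def)
    then have "acyc_orients (insert e I) ends = {}"
      by (auto simp: acyc_orients_def acyclic_def dest: r_into_trancl')
    then show ?thesis
      using tutte_2_0_insert_loop[of I V e ends v, OF insert(1) insert.prems(1) insert(2) uv[unfolded True] edges] by simp
  next
    case False
    let ?ends' = "\<lambda>i. map_prod (merge v u) (merge v u) (ends i)"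
    have "\<And>i. i \<in> I \<Longrightarrow> fst (?ends' i) \<in> V - {v} \<and> snd (?ends' i) \<in> V - {v}"
      using edges V False by (auto simp: merge_def)
    then have "real (card (acyc_orients I ?ends')) = tutte_2_0 (V - {v}) I ?ends'"
      using insert.IH[of "V - {v}" ?ends'] insert.prems(1) by simp
    then show ?thesis
      using card_acyc_orients_contract[of I e ends u v, OF insert(1,2) uv False]
        tutte_2_0_insert_contract[of I V e ends u v, OF insert(1) insert.prems(1) insert(2) uv False V edges]
        insert.IH[OF insert.prems(1) edges] by simp
  qed
qed

text \<open>The graphs of the statement are abstract multigraphs whose edge map is list lookup;
  well_formed collects the invariants preserved by the Sierpinski construction.\<close>

definition well_formed :: "sgraph \<Rightarrow> bool" where
  "well_formed G \<longleftrightarrow> finite (verts G)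
     \<and> (\<forall>i<length (edges G). fst (edges G ! i) \<in> verts G \<and> snd (edges G ! i) \<in> verts G)
     \<and> topv G \<in> verts G \<and> leftv G \<in> verts G \<and> rightv G \<in> verts G
     \<and> topv G \<noteq> leftv G \<and> topv G \<noteq> rightv G \<and> leftv G \<noteq> rightv G \<and> 0 < length (edges G)"

lemma edge_rel_eq_adj: "A \<subseteq> edge_ids G \<Longrightarrow> edge_rel G A = adj (\<lambda>i. edges G ! i) A"
  by (auto simp: edge_rel_def adj_def edge_ids_def)

lemma conn_eq_adj: "A \<subseteq> edge_ids G \<Longrightarrow> conn G A = (adj (\<lambda>i. edges G ! i) A)\<^sup>*"
  by (simp add: conn_def edge_rel_eq_adj)

lemma ncomp_eq_ncomps: "A \<subseteq> edge_ids G \<Longrightarrow> ncomp G A = ncomps (verts G) (\<lambda>i. edges G ! i) A"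
  by (simp add: ncomp_def ncomps_def conn_eq_adj)

lemma tweight_2_0: "tweight G 2 0 A = (-1) ^ nul G A"
  by (simp add: tweight_def)

lemma card_acyclic_orientations:
  assumes "well_formed G"
  shows "real (card (acyclic_orientations G)) = tutte G 2 0"
proof -
  have "arcs G S = orient (edge_ids G) (\<lambda>i. edges G ! i) S" for S
    by (auto simp: arcs_def orient_def edge_ids_def)
  then have "acyclic_orientations G = acyc_orients (edge_ids G) (\<lambda>i. edges G ! i)"
    by (simp add: acyclic_orientations_def acyc_orients_def)
  moreover have "tutte G 2 0 = tutte_2_0 (verts G) (edge_ids G) (\<lambda>i. edges G ! i)"
    unfolding tutte_def tutte_2_0_def tweight_2_0
    by (intro sum.cong) (auto simp: nul_def rk_def nullity_def ncomp_eq_ncomps)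
  ultimately show ?thesis
    using assms card_acyc_orients_eq_tutte_2_0[of "edge_ids G" "verts G" "\<lambda>i. edges G ! i"]
    by (simp add: well_formed_def edge_ids_def)
qed

lemma rank_le:
  assumes "well_formed G" "A \<subseteq> edge_ids G"
  shows "card (verts G) - ncomp G A \<le> card A"
  using rank_le_card[of A "verts G" "\<lambda>i. edges G ! i"] assms
  by (auto simp: well_formed_def edge_ids_def ncomp_eq_ncomps intro: finite_subset)

text \<open>The nullity as an integer, without truncated subtraction.\<close>
lemma nul_int:
  assumes "well_formed G" "A \<subseteq> edge_ids G"
  shows "int (nul G A) = int (card A) - int (card (verts G)) + int (ncomp G A)"
proof -
  have "ncomp G A \<le> card (verts G)"
    using assms ncomps_le[of "verts G"] by (simp add: well_formed_def ncomp_eq_ncomps)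
  then show ?thesis using rank_le[OF assms] by (simp add: nul_def rk_def of_nat_diff)
qed

lemma sym_edge_rel: "sym (edge_rel G A)"
  by (auto simp: edge_rel_def sym_def)

lemma sym_conn: "sym (conn G A)"
  unfolding conn_def by (rule sym_rtrancl[OF sym_edge_rel])

lemma conn_sym: "(a,b) \<in> conn G A \<Longrightarrow> (b,a) \<in> conn G A"
  using sym_conn by (rule symD)

lemma conn_trans: "(a,b) \<in> conn G A \<Longrightarrow> (b,c) \<in> conn G A \<Longrightarrow> (a,c) \<in> conn G A"
  unfolding conn_def by (rule rtrancl_trans)

lemma conn_refl: "(a,a) \<in> conn G A"
  by (simp add: conn_def)

text \<open>The partition that a spanning subgraph induces on the three outmost vertices.\<close>

datatype tpart = Joined | TopAlone | LeftAlone | RightAlone | Apart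

lemma UNIV_tpart: "(UNIV :: tpart set) = {Joined, TopAlone, LeftAlone, RightAlone, Apart}"
  by (auto intro: tpart.exhaust)

instance tpart :: finite
  by standard (simp add: UNIV_tpart)

lemma sum_UNIV_tpart:
  "(\<Sum>\<tau>\<in>UNIV. f \<tau>) = f Joined + f TopAlone + f LeftAlone + f RightAlone + f Apart"
  by (simp add: UNIV_tpart add.assoc)

fun top_left :: "tpart \<Rightarrow> bool" where
  "top_left Joined = True" | "top_left TopAlone = False" | "top_left LeftAlone = False"
| "top_left RightAlone = True" | "top_left Apart = False"

fun top_right :: "tpart \<Rightarrow> bool" where
  "top_right Joined = True" | "top_right TopAlone = False" | "top_right LeftAlone = True"
| "top_right RightAlone = False" | "top_right Apart = False"

fun left_right :: "tpart \<Rightarrow> bool" where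
  "left_right Joined = True" | "left_right TopAlone = True" | "left_right LeftAlone = False"
| "left_right RightAlone = False" | "left_right Apart = False"

text \<open>The partition with the given pairs (top,left), (top,right), (left,right) in one block;
  meaningful when the three flags are transitively closed.\<close>
definition tpart_of :: "bool \<Rightarrow> bool \<Rightarrow> bool \<Rightarrow> tpart" where
  "tpart_of p q s = (if p \<and> q then Joined else if s then TopAlone
      else if q then LeftAlone else if p then RightAlone else Apart)"

definition terminal_type :: "sgraph \<Rightarrow> nat set \<Rightarrow> tpart" where
  "terminal_type G A = tpart_of ((topv G, leftv G) \<in> conn G A) ((topv G, rightv G) \<in> conn G A)
     ((leftv G, rightv G) \<in> conn G A)"

definition type_sum :: "sgraph \<Rightarrow> tpart \<Rightarrow> real" where
  "type_sum G \<tau> = (\<Sum>A\<in>{A\<in>Pow (edge_ids G). terminal_type G A = \<tau>}. (-1) ^ nul G A)"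

lemma tpart_of_flags:
  assumes "p \<and> q \<longrightarrow> s" "p \<and> s \<longrightarrow> q" "q \<and> s \<longrightarrow> p"
  shows "top_left (tpart_of p q s) = p" "top_right (tpart_of p q s) = q"
    "left_right (tpart_of p q s) = s"
  unfolding tpart_of_def using assms by (smt (verit) left_right.simps top_left.simps top_right.simps)+

lemma terminal_type_conn:
  "top_left (terminal_type G A) \<longleftrightarrow> (topv G, leftv G) \<in> conn G A"
  "top_right (terminal_type G A) \<longleftrightarrow> (topv G, rightv G) \<in> conn G A"
  "left_right (terminal_type G A) \<longleftrightarrow> (leftv G, rightv G) \<in> conn G A"
proof -
  have "(topv G, leftv G) \<in> conn G A \<and> (topv G, rightv G) \<in> conn G A \<longrightarrow> (leftv G, rightv G) \<in> conn G A"
    and "(topv G, leftv G) \<in> conn G A \<and> (leftv G, rightv G) \<in> conn G A \<longrightarrow> (topv G, rightv G) \<in> conn G A"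
    and "(topv G, rightv G) \<in> conn G A \<and> (leftv G, rightv G) \<in> conn G A \<longrightarrow> (topv G, leftv G) \<in> conn G A"
    by (blast intro: conn_trans conn_sym)+
  from tpart_of_flags[OF this] show
    "top_left (terminal_type G A) \<longleftrightarrow> (topv G, leftv G) \<in> conn G A"
    "top_right (terminal_type G A) \<longleftrightarrow> (topv G, rightv G) \<in> conn G A"
    "left_right (terminal_type G A) \<longleftrightarrow> (leftv G, rightv G) \<in> conn G A"
    unfolding terminal_type_def by blast+
qed

lemma tpart_eq_iff:
  "\<tau> = Joined \<longleftrightarrow> top_left \<tau> \<and> top_right \<tau>"
  "\<tau> = TopAlone \<longleftrightarrow> left_right \<tau> \<and> \<not> top_left \<tau>"
  "\<tau> = Apart \<longleftrightarrow> \<not> top_left \<tau> \<and> \<not> top_right \<tau> \<and> \<not> left_right \<tau>"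
  by (cases \<tau>; simp)+

lemma type_sums:
  "tutte2 G 2 0 = type_sum G Joined"
  "NN G 2 0 = type_sum G TopAlone"
  "MM G 2 0 = type_sum G Apart"
  by (simp_all add: tutte2_def tutte1_def tutte0_def NN_def MM_def type_sum_def tweight_2_0
      tpart_eq_iff terminal_type_conn)

lemma sum_by_type:
  fixes ty :: "'a \<Rightarrow> 'k::finite" and w :: "'a \<Rightarrow> real"
  assumes "finite P"
  shows "(\<Sum>B\<in>P. F (ty B) * w B) = (\<Sum>\<tau>\<in>UNIV. F \<tau> * (\<Sum>B\<in>{B\<in>P. ty B = \<tau>}. w B))"
proof -
  have "(\<Sum>B\<in>P. F (ty B) * w B) = (\<Sum>B\<in>P. \<Sum>\<tau>\<in>UNIV. if ty B = \<tau> then F \<tau> * w B else 0)"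
    by simp
  also have "\<dots> = (\<Sum>\<tau>\<in>UNIV. \<Sum>B\<in>P. if ty B = \<tau> then F \<tau> * w B else 0)"
    by (rule sum.swap)
  also have "\<dots> = (\<Sum>\<tau>\<in>UNIV. \<Sum>B\<in>{B\<in>P. ty B = \<tau>}. F \<tau> * w B)"
    using assms by (simp add: sum.inter_filter)
  also have "\<dots> = (\<Sum>\<tau>\<in>UNIV. F \<tau> * (\<Sum>B\<in>{B\<in>P. ty B = \<tau>}. w B))"
    by (simp add: sum_distrib_left)
  finally show ?thesis .
qed

lemma tutte_type_sums: "tutte G 2 0 = type_sum G Joined + type_sum G TopAlone
    + type_sum G LeftAlone + type_sum G RightAlone + type_sum G Apart"
  using sum_by_type[of "Pow (edge_ids G)" "\<lambda>_. 1" "terminal_type G" "\<lambda>A. (-1::real) ^ nul G A"]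
  by (simp add: tutte_def tweight_2_0 type_sum_def edge_ids_def sum_UNIV_tpart)

text \<open>Copies 0, 1, 2 of types a, b, c are glued
  at the points g01 = left0 = top1, g02 = right0 = top2, g12 = right1 = left2; the new terminals
  are top0, left1, right2. Two new terminals are connected iff each reaches a gluing point in its
  own copy and these gluing points are joined through the inner triangle g01, g02, g12, whose
  sides are provided by the copies (g01-g02 by a, g01-g12 by b, g02-g12 by c).\<close>

definition glue_type :: "tpart \<Rightarrow> tpart \<Rightarrow> tpart \<Rightarrow> tpart" where
  "glue_type a b c =
    (let j01_02 = left_right a \<or> top_right b \<and> top_left c;
         j01_12 = top_right b \<or> left_right a \<and> top_left c;
         j02_12 = top_left c \<or> left_right a \<and> top_right b
     in tpart_of
      (top_left a \<and> top_left b \<or> top_left a \<and> left_right b \<and> j01_12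
        \<or> top_right a \<and> top_left b \<and> j01_02 \<or> top_right a \<and> left_right b \<and> j02_12)
      (top_right a \<and> top_right c \<or> top_right a \<and> left_right c \<and> j02_12
        \<or> top_left a \<and> top_right c \<and> j01_02 \<or> top_left a \<and> left_right c \<and> j01_12)
      (left_right b \<and> left_right c \<or> left_right b \<and> top_right c \<and> j02_12
        \<or> top_left b \<and> left_right c \<and> j01_12 \<or> top_left b \<and> top_right c \<and> j01_02))"

text \<open>Gluing closes a new cycle iff all three sides of the inner triangle are present.\<close>
definition closes_cycle :: "tpart \<Rightarrow> tpart \<Rightarrow> tpart \<Rightarrow> bool" where
  "closes_cycle a b c \<longleftrightarrow> left_right a \<and> top_right b \<and> top_left c"

definition glue_weight :: "tpart \<Rightarrow> tpart \<Rightarrow> tpart \<Rightarrow> tpart \<Rightarrow> real" where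
  "glue_weight \<tau> a b c = (if glue_type a b c = \<tau> then (if closes_cycle a b c then -1 else 1) else 0)"

definition glue_sums :: "(tpart \<Rightarrow> real) \<Rightarrow> tpart \<Rightarrow> real" where
  "glue_sums S \<tau> = (\<Sum>a\<in>UNIV. \<Sum>b\<in>UNIV. \<Sum>c\<in>UNIV. glue_weight \<tau> a b c * S a * S b * S c)"

lemma glue_sums_values:
  assumes "S LeftAlone = S TopAlone" "S RightAlone = S TopAlone"
  shows "glue_sums S Joined = - (S Joined ^ 3) + 6 * S Joined ^ 2 * S TopAlone + 3 * S Joined * S TopAlone ^ 2"
    "glue_sums S TopAlone = - (S Joined ^ 2 * S TopAlone) + S Joined ^ 2 * S Apart
       + 7 * S Joined * S TopAlone ^ 2 + 2 * S Joined * S TopAlone * S Apart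
       + 4 * S TopAlone ^ 3 + S TopAlone ^ 2 * S Apart"
    "glue_sums S LeftAlone = glue_sums S TopAlone" "glue_sums S RightAlone = glue_sums S TopAlone"
    "glue_sums S Apart = - (3 * S Joined * S TopAlone ^ 2) + 12 * S Joined * S TopAlone * S Apart
       + 3 * S Joined * S Apart ^ 2 + 13 * S TopAlone ^ 3 + 24 * S TopAlone ^ 2 * S Apart
       + 9 * S TopAlone * S Apart ^ 2 + S Apart ^ 3"
  using assms
  by (simp_all add: glue_sums_def sum_UNIV_tpart glue_weight_def glue_type_def closes_cycle_def
      tpart_of_def algebra_simps power2_eq_square power3_eq_cube)

text \<open>Edge sets of the glued graph, whose edges are numbered copy by copy, split into three blocks.\<close>

definition block :: "nat \<Rightarrow> nat \<Rightarrow> nat set \<Rightarrow> nat set" where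
  "block m j A = {k. k < m \<and> j * m + k \<in> A}"

definition join3 :: "nat \<Rightarrow> nat set \<Rightarrow> nat set \<Rightarrow> nat set \<Rightarrow> nat set" where
  "join3 m B0 B1 B2 = B0 \<union> (\<lambda>k. m + k) ` B1 \<union> (\<lambda>k. 2 * m + k) ` B2"

lemma block_subset: "block m j A \<subseteq> {..<m}"
  by (auto simp: block_def)

lemma join3_subset: "B0 \<subseteq> {..<m} \<Longrightarrow> B1 \<subseteq> {..<m} \<Longrightarrow> B2 \<subseteq> {..<m} \<Longrightarrow> join3 m B0 B1 B2 \<subseteq> {..<3 * m}"
  by (auto simp: join3_def)

lemma block_join3:
  assumes "B0 \<subseteq> {..<m}" "B1 \<subseteq> {..<m}" "B2 \<subseteq> {..<m}"
  shows "block m 0 (join3 m B0 B1 B2) = B0" "block m 1 (join3 m B0 B1 B2) = B1"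
    "block m 2 (join3 m B0 B1 B2) = B2"
  using assms by (auto simp: block_def join3_def)

lemma join3_block:
  assumes "A \<subseteq> {..<3 * m}"
  shows "join3 m (block m 0 A) (block m 1 A) (block m 2 A) = A"
proof
  show "join3 m (block m 0 A) (block m 1 A) (block m 2 A) \<subseteq> A" by (auto simp: join3_def block_def)
  show "A \<subseteq> join3 m (block m 0 A) (block m 1 A) (block m 2 A)"
  proof
    fix i assume i: "i \<in> A"
    then consider "i < m" | "m \<le> i" "i < 2 * m" | "2 * m \<le> i" "i < 3 * m" using assms by force
    then show "i \<in> join3 m (block m 0 A) (block m 1 A) (block m 2 A)"
    proof cases
      case 1 then show ?thesis using i by (auto simp: join3_def block_def)
    next
      case 2
      then have "i - m \<in> block m 1 A" "i = m + (i - m)" using i by (auto simp: block_def)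
      then show ?thesis unfolding join3_def by blast
    next
      case 3
      then have "i - 2 * m \<in> block m 2 A" "i = 2 * m + (i - 2 * m)" using i by (auto simp: block_def)
      then show ?thesis unfolding join3_def by blast
    qed
  qed
qed

lemma card_join3:
  assumes "B0 \<subseteq> {..<m}" "B1 \<subseteq> {..<m}" "B2 \<subseteq> {..<m}"
  shows "card (join3 m B0 B1 B2) = card B0 + card B1 + card B2"
proof -
  have fin: "finite B0" "finite B1" "finite B2" using assms finite_subset by blast+
  have "B0 \<inter> (\<lambda>k. m + k) ` B1 = {}" "(B0 \<union> (\<lambda>k. m + k) ` B1) \<inter> (\<lambda>k. 2 * m + k) ` B2 = {}"
    using assms(1,2) by auto
  then show ?thesis unfolding join3_def using fin by (simp add: card_Un_disjoint card_image)
qed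

lemma sum_Pow_join3:
  "(\<Sum>A\<in>Pow {..<3 * m}. F A) = (\<Sum>B0\<in>Pow {..<m}. \<Sum>B1\<in>Pow {..<m}. \<Sum>B2\<in>Pow {..<m}. F (join3 m B0 B1 B2))"
proof -
  have "(\<Sum>A\<in>Pow {..<3 * m}. F A)
      = (\<Sum>(B0,B1,B2)\<in>Pow {..<m} \<times> Pow {..<m} \<times> Pow {..<m}. F (join3 m B0 B1 B2))"
  proof (rule sum.reindex_bij_witness[where j = "\<lambda>A. (block m 0 A, block m 1 A, block m 2 A)"
        and i = "\<lambda>(B0,B1,B2). join3 m B0 B1 B2"])
    fix A assume "A \<in> Pow {..<3 * m}"
    then show "(case (block m 0 A, block m 1 A, block m 2 A) of (B0,B1,B2) \<Rightarrow> join3 m B0 B1 B2) = A"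
      and "(case (block m 0 A, block m 1 A, block m 2 A) of (B0,B1,B2) \<Rightarrow> F (join3 m B0 B1 B2)) = F A"
      using join3_block by auto
    show "(block m 0 A, block m 1 A, block m 2 A) \<in> Pow {..<m} \<times> Pow {..<m} \<times> Pow {..<m}"
      using block_subset by auto
  next
    fix p assume "p \<in> Pow {..<m} \<times> Pow {..<m} \<times> Pow {..<m}"
    then obtain B0 B1 B2 where p: "p = (B0, B1, B2)" and B: "B0 \<subseteq> {..<m}" "B1 \<subseteq> {..<m}" "B2 \<subseteq> {..<m}"
      by auto
    show "(block m 0 (case p of (B0,B1,B2) \<Rightarrow> join3 m B0 B1 B2),
        block m 1 (case p of (B0,B1,B2) \<Rightarrow> join3 m B0 B1 B2),
        block m 2 (case p of (B0,B1,B2) \<Rightarrow> join3 m B0 B1 B2)) = p"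
      using block_join3[OF B] p by simp
    show "(case p of (B0,B1,B2) \<Rightarrow> join3 m B0 B1 B2) \<in> Pow {..<3 * m}"
      using join3_subset[OF B] p by simp
  qed
  then show ?thesis by (simp add: sum.cartesian_product)
qed

lemma triple_sum_by_type:
  fixes ty :: "'a \<Rightarrow> 'k::finite" and w :: "'a \<Rightarrow> real"
  assumes "finite P"
  defines "S \<equiv> \<lambda>a. \<Sum>B\<in>{B\<in>P. ty B = a}. w B"
  shows "(\<Sum>B0\<in>P. \<Sum>B1\<in>P. \<Sum>B2\<in>P. F (ty B0) (ty B1) (ty B2) * w B0 * w B1 * w B2)
       = (\<Sum>a\<in>UNIV. \<Sum>b\<in>UNIV. \<Sum>c\<in>UNIV. F a b c * S a * S b * S c)"
proof -
  have by_type: "(\<Sum>B\<in>P. H (ty B) * w B) = (\<Sum>a\<in>UNIV. H a * S a)" for H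
    unfolding S_def by (rule sum_by_type[OF assms(1)])
  have "(\<Sum>B0\<in>P. \<Sum>B1\<in>P. \<Sum>B2\<in>P. F (ty B0) (ty B1) (ty B2) * w B0 * w B1 * w B2)
      = (\<Sum>B0\<in>P. \<Sum>B1\<in>P. (\<Sum>c\<in>UNIV. F (ty B0) (ty B1) c * w B0 * S c) * w B1)"
    using by_type[of "\<lambda>c. F _ _ c * w _ * w _"]
    by (simp add: sum_distrib_left sum_distrib_right mult_ac)
  also have "\<dots> = (\<Sum>B0\<in>P. (\<Sum>b\<in>UNIV. \<Sum>c\<in>UNIV. F (ty B0) b c * S b * S c) * w B0)"
    using by_type[of "\<lambda>b. \<Sum>c\<in>UNIV. F _ b c * w _ * S c"]
    by (simp add: sum_distrib_left sum_distrib_right mult_ac)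
  also have "\<dots> = (\<Sum>a\<in>UNIV. \<Sum>b\<in>UNIV. \<Sum>c\<in>UNIV. F a b c * S a * S b * S c)"
    using by_type[of "\<lambda>a. \<Sum>b\<in>UNIV. \<Sum>c\<in>UNIV. F a b c * S b * S c"]
    by (simp add: sum_distrib_left sum_distrib_right mult_ac)
  finally show ?thesis .
qed

lemma copyv_eq_iff: "i < 3 \<Longrightarrow> j < 3 \<Longrightarrow> copyv i a = copyv j b \<longleftrightarrow> i = j \<and> a = b"
  unfolding copyv_def by presburger

lemma less_3_cases:
  assumes "(j::nat) < 3"
  obtains "j = 0" | "j = 1" | "j = 2"
  using assms by linarith

lemma rtrancl_copies:
  "(\<Union>j\<in>{0,1,2::nat}. map_prod (copyv j) (copyv j) ` R j)\<^sup>*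
     = Id \<union> (\<Union>j\<in>{0,1,2::nat}. map_prod (copyv j) (copyv j) ` (R j)\<^sup>*)"
  (is "?L\<^sup>* = ?R")
proof
  show "?L\<^sup>* \<subseteq> ?R"
  proof (rule subrelI)
    fix a b assume "(a,b) \<in> ?L\<^sup>*"
    then show "(a,b) \<in> ?R"
    proof (induction rule: rtrancl_induct)
      case (step y z)
      from step.hyps(2) obtain j a' b' where j: "j \<in> {0,1,2}" "(a',b') \<in> R j"
        "y = copyv j a'" "z = copyv j b'" by auto
      from step.IH show ?case
      proof
        assume "(a,y) \<in> Id"
        then show ?thesis using j by blast
      next
        assume "(a,y) \<in> (\<Union>j\<in>{0,1,2::nat}. map_prod (copyv j) (copyv j) ` (R j)\<^sup>*)"
        then obtain i a'' c where i: "i \<in> {0,1,2}" "(a'',c) \<in> (R i)\<^sup>*" "a = copyv i a''" "y = copyv i c"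
          by auto
        then have "i = j" "c = a'" using copyv_eq_iff[of i j c a'] j by auto
        with i j have "(a'',b') \<in> (R j)\<^sup>*" by (meson rtrancl.rtrancl_into_rtrancl)
        then show ?thesis using i j \<open>i = j\<close> by blast
      qed
    qed simp
  qed
  have "map_prod (copyv j) (copyv j) ` (R j)\<^sup>* \<subseteq> ?L\<^sup>*" if "j \<in> {0,1,2}" for j
    using rtrancl_map_prod_image[of _ _ "R j" "copyv j"] rtrancl_mono[of "map_prod (copyv j) (copyv j) ` R j" ?L] that
    by blast
  then show "?R \<subseteq> ?L\<^sup>*" by blast
qed

lemma rtrancl_copies_iff:
  assumes "i \<in> {0,1,2}" "j \<in> {0,1,2}"
  shows "(copyv i a, copyv j b) \<in> (\<Union>j\<in>{0,1,2::nat}. map_prod (copyv j) (copyv j) ` R j)\<^sup>*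
    \<longleftrightarrow> i = j \<and> (a,b) \<in> (R i)\<^sup>*"
proof -
  have "i < 3" "j < 3" using assms by auto
  then have "(copyv i a, copyv j b) \<in> Id \<union> (\<Union>j\<in>{0,1,2::nat}. map_prod (copyv j) (copyv j) ` (R j)\<^sup>*)
     \<longleftrightarrow> i = j \<and> (a,b) \<in> (R i)\<^sup>*"
    using assms copyv_eq_iff by (auto 4 3)
  then show ?thesis by (simp only: rtrancl_copies)
qed

lemma glue3_eq_iff:
  assumes "distinct [s1, s2, s3, t1, t2, t3]"
  shows "((if x = s1 then t1 else if x = s2 then t2 else if x = s3 then t3 else x) =
          (if y = s1 then t1 else if y = s2 then t2 else if y = s3 then t3 else y)) \<longleftrightarrow>
         x = y \<or> (x = s1 \<and> y = t1) \<or> (x = t1 \<and> y = s1) \<or> (x = s2 \<and> y = t2) \<or> (x = t2 \<and> y = s2)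
          \<or> (x = s3 \<and> y = t3) \<or> (x = t3 \<and> y = s3)"
  using assms by auto

text \<open>One Sierpinski step H = sier_step G. Its edges are the images under the identification map
  of the edges of the disjoint union of three copies of G; edge j*m+k of H is edge k of copy j.\<close>

locale sierpinski_step =
  fixes G :: sgraph
  assumes wf: "well_formed G"
begin

abbreviation "m \<equiv> length (edges G)"
abbreviation "H \<equiv> sier_step G"
abbreviation "glue \<equiv> identify G"

lemma wf_facts:
  "finite (verts G)" "\<And>i. i < m \<Longrightarrow> fst (edges G ! i) \<in> verts G"
  "\<And>i. i < m \<Longrightarrow> snd (edges G ! i) \<in> verts G"
  "topv G \<in> verts G" "leftv G \<in> verts G" "rightv G \<in> verts G"
  "topv G \<noteq> leftv G" "topv G \<noteq> rightv G" "leftv G \<noteq> rightv G" "0 < m"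
  using wf by (auto simp: well_formed_def)

definition copies :: "nat set" where
  "copies = copyv 0 ` verts G \<union> copyv 1 ` verts G \<union> copyv 2 ` verts G"

definition copy_ends :: "nat \<Rightarrow> nat \<times> nat" where
  "copy_ends i = map_prod (copyv (i div m)) (copyv (i div m)) (edges G ! (i mod m))"

lemma copy_in_copies: "j < 3 \<Longrightarrow> v \<in> verts G \<Longrightarrow> copyv j v \<in> copies"
  by (cases j rule: less_3_cases) (auto simp: copies_def)

lemma glue_pairs_distinct:
  "distinct [copyv 0 (leftv G), copyv 0 (rightv G), copyv 1 (rightv G),
             copyv 1 (topv G), copyv 2 (topv G), copyv 2 (leftv G)]"
  using wf_facts(7-9) by (simp add: copyv_eq_iff)

lemma glue_eq_iff:
  "glue x = glue y \<longleftrightarrow> x = y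
     \<or> (x = copyv 0 (leftv G) \<and> y = copyv 1 (topv G)) \<or> (x = copyv 1 (topv G) \<and> y = copyv 0 (leftv G))
     \<or> (x = copyv 0 (rightv G) \<and> y = copyv 2 (topv G)) \<or> (x = copyv 2 (topv G) \<and> y = copyv 0 (rightv G))
     \<or> (x = copyv 1 (rightv G) \<and> y = copyv 2 (leftv G)) \<or> (x = copyv 2 (leftv G) \<and> y = copyv 1 (rightv G))"
  unfolding identify_def by (rule glue3_eq_iff[OF glue_pairs_distinct])

lemma glue_copy:
  "glue (copyv 0 v) = (if v = leftv G then copyv 1 (topv G) else if v = rightv G then copyv 2 (topv G) else copyv 0 v)"
  "glue (copyv 1 v) = (if v = rightv G then copyv 2 (leftv G) else copyv 1 v)"
  "glue (copyv 2 v) = copyv 2 v"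
  unfolding identify_def by (auto simp: copyv_eq_iff)

lemma glue_terminals:
  "glue (copyv 0 (topv G)) = copyv 0 (topv G)" "glue (copyv 1 (leftv G)) = copyv 1 (leftv G)"
  "glue (copyv 2 (rightv G)) = copyv 2 (rightv G)"
  using glue_copy wf_facts(7-9) by simp_all

lemma H_terminals:
  "topv H = copyv 0 (topv G)" "leftv H = copyv 1 (leftv G)" "rightv H = copyv 2 (rightv G)"
  using wf_facts(7-9) glue_copy by (simp_all add: sier_step_def)

lemma verts_H: "verts H = glue ` copies"
  by (simp add: sier_step_def copies_def Un_assoc)

lemma length_edges_H: "length (edges H) = 3 * m"
  by (simp add: sier_step_def)

lemma edges_H_nth:
  assumes "i < 3 * m"
  shows "edges H ! i = map_prod glue glue (copy_ends i)"
proof -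
  let ?L = "\<lambda>j. map (\<lambda>(u,v). (glue (copyv j u), glue (copyv j v))) (edges G)"
  have "edges H = ?L 0 @ ?L 1 @ ?L 2" by (simp add: sier_step_def)
  moreover have "i div m < 3" "i mod m < m" using assms wf_facts(10)
    by (simp_all add: less_mult_imp_div_less mult.commute)
  moreover have "(?L 0 @ ?L 1 @ ?L 2) ! (j * m + k) = ?L j ! k" if "j < 3" "k < m" for j k
    using that by (cases j rule: less_3_cases) (simp_all add: nth_append)
  ultimately have "edges H ! i = ?L (i div m) ! (i mod m)"
    by (metis div_mult_mod_eq)
  then show ?thesis using \<open>i mod m < m\<close>
    by (cases "edges G ! (i mod m)") (simp add: copy_ends_def)
qed

lemma copy_ends_block:
  assumes "k < m"
  shows "copy_ends (j * m + k) = map_prod (copyv j) (copyv j) (edges G ! k)"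
proof -
  have "m \<noteq> 0" using wf_facts(10) by linarith
  then have "(k + j * m) div m = j + k div m" by (rule div_mult_self1)
  then have "(j * m + k) div m = j" using assms by (simp add: add.commute)
  moreover have "(j * m + k) mod m = k" using assms by simp
  ultimately show ?thesis by (simp add: copy_ends_def)
qed

lemma adj_copy_ends:
  assumes A: "A \<subseteq> {..<3 * m}"
  shows "adj copy_ends A =
    (\<Union>j\<in>{0,1,2}. map_prod (copyv j) (copyv j) ` adj (\<lambda>i. edges G ! i) (block m j A))"
    (is "_ = ?U")
proof
  show "adj copy_ends A \<subseteq> ?U"
  proof (rule subrelI)
    fix x y assume "(x,y) \<in> adj copy_ends A"
    then obtain i where i: "i \<in> A" "copy_ends i = (x,y) \<or> copy_ends i = (y,x)"
      by (auto simp: adj_def)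
    let ?j = "i div m" and ?k = "i mod m"
    have "?j < 3" using A i wf_facts(10) by (auto simp: less_mult_imp_div_less mult.commute)
    then have j: "?j \<in> {0,1,2}" by (auto elim: less_3_cases)
    have k: "?k \<in> block m ?j A" using i wf_facts(10) by (simp add: block_def)
    obtain c d where cd: "edges G ! ?k = (c,d)" by fastforce
    then have "(c,d) \<in> adj (\<lambda>i. edges G ! i) (block m ?j A)" "(d,c) \<in> adj (\<lambda>i. edges G ! i) (block m ?j A)"
      using k by (auto simp: adj_def)
    moreover have "(x,y) = (copyv ?j c, copyv ?j d) \<or> (x,y) = (copyv ?j d, copyv ?j c)"
      using i(2) cd by (auto simp: copy_ends_def)
    ultimately show "(x,y) \<in> ?U" using j by blast
  qed
  show "?U \<subseteq> adj copy_ends A"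
  proof (rule subrelI)
    fix x y assume "(x,y) \<in> ?U"
    then obtain j c d k where j: "j \<in> {0,1,2}" "(x,y) = (copyv j c, copyv j d)" "k \<in> block m j A"
      "edges G ! k = (c,d) \<or> edges G ! k = (d,c)"
      by (auto simp: adj_def)
    then have "j * m + k \<in> A" "k < m" by (auto simp: block_def)
    with j show "(x,y) \<in> adj copy_ends A"
      unfolding adj_def using copy_ends_block by force
  qed
qed

lemma edge_rel_H:
  assumes "A \<subseteq> {..<3 * m}"
  shows "edge_rel H A = map_prod glue glue ` adj copy_ends A"
proof -
  have "edge_rel H A = adj (\<lambda>i. edges H ! i) A"
    using assms by (intro edge_rel_eq_adj) (simp add: edge_ids_def length_edges_H)
  also have "\<dots> = adj (\<lambda>i. map_prod glue glue (copy_ends i)) A"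
    using assms by (intro adj_cong) (auto simp: edges_H_nth)
  finally show ?thesis by (simp add: adj_map_ends)
qed


text \<open>Connectivity of H, obtained from the disjoint union by performing the three
  identifications one at a time: stage k has the first k of them.\<close>

definition pair1 :: "nat rel" where
  "pair1 = {(copyv 0 (leftv G), copyv 1 (topv G)), (copyv 1 (topv G), copyv 0 (leftv G))}"
definition pair2 :: "nat rel" where
  "pair2 = {(copyv 0 (rightv G), copyv 2 (topv G)), (copyv 2 (topv G), copyv 0 (rightv G))}"
definition pair3 :: "nat rel" where
  "pair3 = {(copyv 1 (rightv G), copyv 2 (leftv G)), (copyv 2 (leftv G), copyv 1 (rightv G))}"

definition stage0 :: "nat set \<Rightarrow> nat rel" where "stage0 A = (adj copy_ends A)\<^sup>*"
definition stage1 :: "nat set \<Rightarrow> nat rel" where "stage1 A = (adj copy_ends A \<union> pair1)\<^sup>*"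
definition stage2 :: "nat set \<Rightarrow> nat rel" where "stage2 A = (adj copy_ends A \<union> pair1 \<union> pair2)\<^sup>*"
definition stage3 :: "nat set \<Rightarrow> nat rel" where
  "stage3 A = (adj copy_ends A \<union> pair1 \<union> pair2 \<union> pair3)\<^sup>*"

lemma sym_stages:
  "sym (adj copy_ends A)" "sym (adj copy_ends A \<union> pair1)" "sym (adj copy_ends A \<union> pair1 \<union> pair2)"
  "sym (adj copy_ends A \<union> pair1 \<union> pair2 \<union> pair3)"
  using sym_adj[of copy_ends A] by (auto simp: pair1_def pair2_def pair3_def sym_def)

lemma stage1_iff: "(a,b) \<in> stage1 A \<longleftrightarrow> (a,b) \<in> stage0 A
    \<or> ((a, copyv 0 (leftv G)) \<in> stage0 A \<and> (copyv 1 (topv G), b) \<in> stage0 A)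
    \<or> ((a, copyv 1 (topv G)) \<in> stage0 A \<and> (copyv 0 (leftv G), b) \<in> stage0 A)"
  unfolding stage1_def stage0_def pair1_def rtrancl_Un_sym_pair[OF sym_stages(1)] by blast

lemma stage2_iff: "(a,b) \<in> stage2 A \<longleftrightarrow> (a,b) \<in> stage1 A
    \<or> ((a, copyv 0 (rightv G)) \<in> stage1 A \<and> (copyv 2 (topv G), b) \<in> stage1 A)
    \<or> ((a, copyv 2 (topv G)) \<in> stage1 A \<and> (copyv 0 (rightv G), b) \<in> stage1 A)"
  unfolding stage2_def stage1_def pair2_def rtrancl_Un_sym_pair[OF sym_stages(2)] by blast

lemma stage3_iff: "(a,b) \<in> stage3 A \<longleftrightarrow> (a,b) \<in> stage2 A
    \<or> ((a, copyv 1 (rightv G)) \<in> stage2 A \<and> (copyv 2 (leftv G), b) \<in> stage2 A)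
    \<or> ((a, copyv 2 (leftv G)) \<in> stage2 A \<and> (copyv 1 (rightv G), b) \<in> stage2 A)"
  unfolding stage3_def stage2_def pair3_def rtrancl_Un_sym_pair[OF sym_stages(3)] by blast

lemma block_edge_ids: "block m j A \<subseteq> edge_ids G"
  by (auto simp: block_def edge_ids_def)

lemma stage0_iff:
  assumes "A \<subseteq> {..<3 * m}" "i \<in> {0,1,2}" "j \<in> {0,1,2}"
  shows "(copyv i a, copyv j b) \<in> stage0 A \<longleftrightarrow> i = j \<and> (a,b) \<in> conn G (block m i A)"
  unfolding stage0_def adj_copy_ends[OF assms(1)] rtrancl_copies_iff[OF assms(2,3)]
  by (simp add: conn_eq_adj[OF block_edge_ids])

lemma conn_H_iff:
  assumes "A \<subseteq> {..<3 * m}"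
  shows "(glue x, glue y) \<in> conn H A \<longleftrightarrow> (x,y) \<in> stage3 A"
proof -
  have "(glue x, glue y) \<in> conn H A \<longleftrightarrow> (x,y) \<in> (adj copy_ends A \<union> {(a,b). glue a = glue b})\<^sup>*"
    unfolding conn_def edge_rel_H[OF assms] by (rule rtrancl_image_map_prod_iff)
  also have "adj copy_ends A \<union> {(a,b). glue a = glue b} = (adj copy_ends A \<union> pair1 \<union> pair2 \<union> pair3)\<^sup>="
    using glue_eq_iff by (auto simp: pair1_def pair2_def pair3_def)
  finally show ?thesis by (simp add: stage3_def)
qed

lemma conn_terminals:
  "(topv G, leftv G) \<in> conn G B \<longleftrightarrow> top_left (terminal_type G B)"
  "(leftv G, topv G) \<in> conn G B \<longleftrightarrow> top_left (terminal_type G B)"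
  "(topv G, rightv G) \<in> conn G B \<longleftrightarrow> top_right (terminal_type G B)"
  "(rightv G, topv G) \<in> conn G B \<longleftrightarrow> top_right (terminal_type G B)"
  "(leftv G, rightv G) \<in> conn G B \<longleftrightarrow> left_right (terminal_type G B)"
  "(rightv G, leftv G) \<in> conn G B \<longleftrightarrow> left_right (terminal_type G B)"
  "(x, x) \<in> conn G B"
  using terminal_type_conn[of G B] conn_sym[of _ _ G B] conn_refl by blast+

lemmas stage_simps = stage3_iff stage2_iff stage1_iff stage0_iff conn_terminals
  simp_thms insert_iff singleton_iff zero_neq_one one_neq_zero numeral_One[symmetric]
  zero_neq_numeral numeral_neq_zero numeral_eq_iff semiring_norm

lemma terminal_type_H:
  assumes A: "A \<subseteq> {..<3 * m}"
  shows "terminal_type H A =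
    glue_type (terminal_type G (block m 0 A)) (terminal_type G (block m 1 A)) (terminal_type G (block m 2 A))"
proof -
  have "terminal_type H A = tpart_of ((copyv 0 (topv G), copyv 1 (leftv G)) \<in> stage3 A)
      ((copyv 0 (topv G), copyv 2 (rightv G)) \<in> stage3 A) ((copyv 1 (leftv G), copyv 2 (rightv G)) \<in> stage3 A)"
    unfolding terminal_type_def H_terminals conn_H_iff[OF A, symmetric] glue_terminals ..
  also have "\<dots> = glue_type (terminal_type G (block m 0 A)) (terminal_type G (block m 1 A))
      (terminal_type G (block m 2 A))"
    apply (simp only: stage_simps stage0_iff[OF A])
    by (cases "terminal_type G (block m 0 A)"; cases "terminal_type G (block m 1 A)";
        cases "terminal_type G (block m 2 A)"; simp add: glue_type_def tpart_of_def)
  finally show ?thesis .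
qed


text \<open>The first two identifications always join two different components; the third one
  closes a cycle exactly when the glue types say so.\<close>
lemma gluing_pairs_connected:
  assumes A: "A \<subseteq> {..<3 * m}"
  shows "(copyv 0 (leftv G), copyv 1 (topv G)) \<notin> stage0 A"
    "(copyv 0 (rightv G), copyv 2 (topv G)) \<notin> stage1 A"
    "(copyv 1 (rightv G), copyv 2 (leftv G)) \<in> stage2 A \<longleftrightarrow>
       closes_cycle (terminal_type G (block m 0 A)) (terminal_type G (block m 1 A)) (terminal_type G (block m 2 A))"
proof -
  show "(copyv 0 (leftv G), copyv 1 (topv G)) \<notin> stage0 A"
    by (simp add: stage0_iff[OF A])
  show "(copyv 0 (rightv G), copyv 2 (topv G)) \<notin> stage1 A"
    unfolding stage1_iff by (simp add: stage0_iff[OF A])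
  show "(copyv 1 (rightv G), copyv 2 (leftv G)) \<in> stage2 A \<longleftrightarrow>
       closes_cycle (terminal_type G (block m 0 A)) (terminal_type G (block m 1 A)) (terminal_type G (block m 2 A))"
    apply (simp only: stage_simps stage0_iff[OF A])
    by (cases "terminal_type G (block m 0 A)"; cases "terminal_type G (block m 1 A)";
        cases "terminal_type G (block m 2 A)"; simp add: closes_cycle_def)
qed

lemma card_copies: "card copies = 3 * card (verts G)"
proof -
  have "inj_on (copyv j) X" for j X by (auto simp: inj_on_def copyv_def)
  then have "card (copyv j ` verts G) = card (verts G)" for j by (simp add: card_image)
  moreover have "copyv 0 ` verts G \<inter> copyv 1 ` verts G = {}"
    "(copyv 0 ` verts G \<union> copyv 1 ` verts G) \<inter> copyv 2 ` verts G = {}"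
    by (auto simp: copyv_eq_iff)
  ultimately show ?thesis unfolding copies_def using wf_facts(1) by (simp add: card_Un_disjoint)
qed

text \<open>Gluing removes the three points copy0(left), copy0(right), copy1(right) and fixes the rest.\<close>
lemma card_verts_H: "card (verts H) = 3 * card (verts G) - 3"
proof -
  let ?S = "{copyv 0 (leftv G), copyv 0 (rightv G), copyv 1 (rightv G)}"
  let ?T = "{copyv 1 (topv G), copyv 2 (topv G), copyv 2 (leftv G)}"
  have in_copies: "?S \<subseteq> copies" "?T \<subseteq> copies" using wf_facts(4-6) copy_in_copies by auto
  have disj: "?S \<inter> ?T = {}" and card_S: "card ?S = 3"
    using glue_pairs_distinct by auto
  have fixed: "glue x = x" if "x \<notin> ?S" for x using that by (auto simp: identify_def)
  have moved: "glue ` ?S = ?T"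
    using glue_copy(1)[of "leftv G"] glue_copy(1)[of "rightv G"] glue_copy(2)[of "rightv G"] wf_facts(7-9)
    by auto
  have "glue ` copies = copies - ?S"
  proof
    show "glue ` copies \<subseteq> copies - ?S"
    proof
      fix y assume "y \<in> glue ` copies"
      then obtain x where x: "x \<in> copies" "y = glue x" by blast
      show "y \<in> copies - ?S"
      proof (cases "x \<in> ?S")
        case True
        then have "y \<in> ?T" using x moved by blast
        then show ?thesis using in_copies disj by blast
      next
        case False
        then show ?thesis using x fixed by simp
      qed
    qed
    show "copies - ?S \<subseteq> glue ` copies"
      using fixed by (metis (no_types, lifting) DiffE image_eqI subsetI)
  qed
  then have "card (verts H) = card copies - card ?S"
    using in_copies wf_facts(1) by (simp add: verts_H card_Diff_subset copies_def)
  then show ?thesis using card_S card_copies by simp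
qed


lemma ncomp_H_stage3:
  assumes A: "A \<subseteq> {..<3 * m}"
  shows "ncomp H A = card ((\<lambda>x. stage3 A `` {x}) ` copies)"
proof -
  have "ncomp H A = card ((\<lambda>x. conn H A `` {glue x}) ` copies)"
    by (simp add: ncomp_def verts_H image_image)
  also have "\<dots> = card ((\<lambda>x. stage3 A `` {x}) ` copies)"
  proof (rule card_image_eq_if_same_kernel)
    fix a b
    show "conn H A `` {glue a} = conn H A `` {glue b} \<longleftrightarrow> stage3 A `` {a} = stage3 A `` {b}"
      unfolding conn_def sym_rtrancl_class_eq_iff[OF sym_edge_rel] stage3_def
        sym_rtrancl_class_eq_iff[OF sym_stages(4)]
      using conn_H_iff[OF A] by (simp add: conn_def stage3_def)
  qed
  finally show ?thesis .
qed

lemma card_stages: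
  "card ((\<lambda>x. stage3 A `` {x}) ` copies) = card ((\<lambda>x. stage2 A `` {x}) ` copies)
     - (if (copyv 1 (rightv G), copyv 2 (leftv G)) \<in> stage2 A then 0 else 1)"
  "card ((\<lambda>x. stage2 A `` {x}) ` copies) = card ((\<lambda>x. stage1 A `` {x}) ` copies)
     - (if (copyv 0 (rightv G), copyv 2 (topv G)) \<in> stage1 A then 0 else 1)"
  "card ((\<lambda>x. stage1 A `` {x}) ` copies) = card ((\<lambda>x. stage0 A `` {x}) ` copies)
     - (if (copyv 0 (leftv G), copyv 1 (topv G)) \<in> stage0 A then 0 else 1)"
proof -
  have fin: "finite copies" using wf_facts(1) by (simp add: copies_def)
  have in_copies: "copyv j v \<in> copies" if "j < 3" "v \<in> {topv G, leftv G, rightv G}" for j v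
    using that wf_facts(4-6) copy_in_copies by auto
  show "card ((\<lambda>x. stage3 A `` {x}) ` copies) = card ((\<lambda>x. stage2 A `` {x}) ` copies)
     - (if (copyv 1 (rightv G), copyv 2 (leftv G)) \<in> stage2 A then 0 else 1)"
    unfolding stage3_def stage2_def pair3_def
    by (rule card_classes_Un_sym_pair[OF sym_stages(3) fin]) (simp_all add: in_copies)
  show "card ((\<lambda>x. stage2 A `` {x}) ` copies) = card ((\<lambda>x. stage1 A `` {x}) ` copies)
     - (if (copyv 0 (rightv G), copyv 2 (topv G)) \<in> stage1 A then 0 else 1)"
    unfolding stage2_def stage1_def pair2_def
    by (rule card_classes_Un_sym_pair[OF sym_stages(2) fin]) (simp_all add: in_copies)
  show "card ((\<lambda>x. stage1 A `` {x}) ` copies) = card ((\<lambda>x. stage0 A `` {x}) ` copies)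
     - (if (copyv 0 (leftv G), copyv 1 (topv G)) \<in> stage0 A then 0 else 1)"
    unfolding stage1_def stage0_def pair1_def
    by (rule card_classes_Un_sym_pair[OF sym_stages(1) fin]) (simp_all add: in_copies)
qed

lemma card_stage0:
  assumes A: "A \<subseteq> {..<3 * m}"
  shows "card ((\<lambda>x. stage0 A `` {x}) ` copies) =
    ncomp G (block m 0 A) + ncomp G (block m 1 A) + ncomp G (block m 2 A)"
proof -
  let ?h = "\<lambda>x. stage0 A `` {x}"
  have class_eq: "?h x = ?h y \<longleftrightarrow> (x,y) \<in> stage0 A" for x y
    unfolding stage0_def by (rule sym_rtrancl_class_eq_iff[OF sym_stages(1)])
  have per_copy: "card (?h ` copyv j ` verts G) = ncomp G (block m j A)" if j: "j \<in> {0,1,2}" for j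
  proof -
    have "card (?h ` copyv j ` verts G) = card ((\<lambda>v. conn G (block m j A) `` {v}) ` verts G)"
      unfolding image_image
    proof (rule card_image_eq_if_same_kernel)
      fix a b
      show "?h (copyv j a) = ?h (copyv j b) \<longleftrightarrow> conn G (block m j A) `` {a} = conn G (block m j A) `` {b}"
        unfolding class_eq stage0_iff[OF A j j] conn_def sym_rtrancl_class_eq_iff[OF sym_edge_rel] by simp
    qed
    then show ?thesis by (simp add: ncomp_def)
  qed
  have disjoint: "?h ` copyv i ` verts G \<inter> ?h ` copyv j ` verts G = {}"
    if "i \<in> {0,1,2}" "j \<in> {0,1,2}" "i \<noteq> j" for i j
  proof -
    have "?h (copyv i a) \<noteq> ?h (copyv j b)" for a b
      unfolding class_eq stage0_iff[OF A that(1,2)] using that(3) by simp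
    then show ?thesis by blast
  qed
  have "?h ` copies = (?h ` copyv 0 ` verts G \<union> ?h ` copyv 1 ` verts G) \<union> ?h ` copyv 2 ` verts G"
    by (auto simp: copies_def)
  moreover have "(?h ` copyv 0 ` verts G \<union> ?h ` copyv 1 ` verts G) \<inter> ?h ` copyv 2 ` verts G = {}"
    using disjoint[of 0 2] disjoint[of 1 2] by (simp add: Int_Un_distrib2)
  moreover have "?h ` copyv 0 ` verts G \<inter> ?h ` copyv 1 ` verts G = {}" by (rule disjoint) simp_all
  ultimately show ?thesis
    using per_copy wf_facts(1) by (simp add: card_Un_disjoint)
qed

lemma ncomp_pos: "0 < ncomp G B"
  using wf_facts(1,4) by (auto simp: ncomp_def card_gt_0_iff)

text \<open>Components of H: those of the blocks, minus the two forced merges, minus one more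
  unless gluing closes a cycle.\<close>
lemma ncomp_H:
  assumes A: "A \<subseteq> {..<3 * m}"
  shows "int (ncomp H A) = int (ncomp G (block m 0 A)) + int (ncomp G (block m 1 A))
     + int (ncomp G (block m 2 A)) - 3
     + (if closes_cycle (terminal_type G (block m 0 A)) (terminal_type G (block m 1 A))
          (terminal_type G (block m 2 A)) then 1 else 0)"
  using card_stages[of A] gluing_pairs_connected[OF A] card_stage0[OF A] ncomp_H_stage3[OF A]
    ncomp_pos[of "block m 0 A"] ncomp_pos[of "block m 1 A"] ncomp_pos[of "block m 2 A"]
  by (auto simp: of_nat_diff)


lemma well_formed_H: "well_formed H"
proof -
  have edges_in: "fst (edges H ! i) \<in> verts H \<and> snd (edges H ! i) \<in> verts H" if "i < 3 * m" for i
  proof -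
    have "i div m < 3" "i mod m < m" using that wf_facts(10)
      by (simp_all add: less_mult_imp_div_less mult.commute)
    then have "fst (copy_ends i) \<in> copies" "snd (copy_ends i) \<in> copies"
      using wf_facts(2,3) copy_in_copies by (simp_all add: copy_ends_def)
    then show ?thesis unfolding edges_H_nth[OF that] verts_H by (cases "copy_ends i") auto
  qed
  have in_H: "copyv j v \<in> verts H" if "j < 3" "v \<in> verts G" "glue (copyv j v) = copyv j v" for j v
    unfolding verts_H using that copy_in_copies by (metis image_eqI)
  have "topv H \<in> verts H" "leftv H \<in> verts H" "rightv H \<in> verts H"
    unfolding H_terminals using glue_terminals wf_facts(4-6) by (auto intro!: in_H)
  moreover have "topv H \<noteq> leftv H" "topv H \<noteq> rightv H" "leftv H \<noteq> rightv H"
    unfolding H_terminals by (simp_all add: copyv_eq_iff)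
  moreover have "finite (verts H)" using wf_facts(1) by (simp add: verts_H copies_def)
  ultimately show ?thesis unfolding well_formed_def
    using wf_facts(10) edges_in by (simp add: length_edges_H)
qed

lemma card_verts_ge_3: "3 \<le> card (verts G)"
proof -
  have "card {topv G, leftv G, rightv G} \<le> card (verts G)"
    using wf_facts(1,4-6) by (intro card_mono) auto
  then show ?thesis using wf_facts(7-9) by simp
qed

lemma nul_H:
  assumes A: "A \<subseteq> {..<3 * m}"
  shows "nul H A = nul G (block m 0 A) + nul G (block m 1 A) + nul G (block m 2 A)
     + (if closes_cycle (terminal_type G (block m 0 A)) (terminal_type G (block m 1 A))
          (terminal_type G (block m 2 A)) then 1 else 0)"
proof -
  have AH: "A \<subseteq> edge_ids H" using A by (simp add: edge_ids_def length_edges_H)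
  have "card A = card (block m 0 A) + card (block m 1 A) + card (block m 2 A)"
    using card_join3[OF block_subset block_subset block_subset] join3_block[OF A] by metis
  moreover have "int (card (verts H)) = 3 * int (card (verts G)) - 3"
    using card_verts_H card_verts_ge_3 by simp
  ultimately have "int (nul H A) = int (nul G (block m 0 A)) + int (nul G (block m 1 A))
     + int (nul G (block m 2 A))
     + (if closes_cycle (terminal_type G (block m 0 A)) (terminal_type G (block m 1 A))
          (terminal_type G (block m 2 A)) then 1 else 0)"
    unfolding nul_int[OF well_formed_H AH] nul_int[OF wf block_edge_ids] ncomp_H[OF A] by simp
  then show ?thesis by (simp split: if_splits)
qed

lemma type_sum_H: "type_sum H \<tau> = glue_sums (type_sum G) \<tau>"
proof -
  let ?w = "\<lambda>B. (-1::real) ^ nul G B"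
  have "type_sum H \<tau> = (\<Sum>A\<in>Pow {..<3 * m}. if terminal_type H A = \<tau> then (-1) ^ nul H A else 0)"
    unfolding type_sum_def edge_ids_def length_edges_H by (rule sum.inter_filter) simp
  also have "\<dots> = (\<Sum>B0\<in>Pow {..<m}. \<Sum>B1\<in>Pow {..<m}. \<Sum>B2\<in>Pow {..<m}.
      glue_weight \<tau> (terminal_type G B0) (terminal_type G B1) (terminal_type G B2) * ?w B0 * ?w B1 * ?w B2)"
    unfolding sum_Pow_join3
  proof (intro sum.cong refl)
    fix B0 B1 B2 assume "B0 \<in> Pow {..<m}" "B1 \<in> Pow {..<m}" "B2 \<in> Pow {..<m}"
    then have B: "B0 \<subseteq> {..<m}" "B1 \<subseteq> {..<m}" "B2 \<subseteq> {..<m}" by auto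
    have "terminal_type H (join3 m B0 B1 B2) = glue_type (terminal_type G B0) (terminal_type G B1) (terminal_type G B2)"
      and "nul H (join3 m B0 B1 B2) = nul G B0 + nul G B1 + nul G B2
        + (if closes_cycle (terminal_type G B0) (terminal_type G B1) (terminal_type G B2) then 1 else 0)"
      using terminal_type_H[OF join3_subset[OF B]] nul_H[OF join3_subset[OF B]] unfolding block_join3[OF B] .
    then show "(if terminal_type H (join3 m B0 B1 B2) = \<tau> then (-1) ^ nul H (join3 m B0 B1 B2) else 0) =
       glue_weight \<tau> (terminal_type G B0) (terminal_type G B1) (terminal_type G B2) * ?w B0 * ?w B1 * ?w B2"
      by (simp add: glue_weight_def power_add)
  qed
  also have "\<dots> = glue_sums (type_sum G) \<tau>"
    unfolding glue_sums_def type_sum_def edge_ids_def by (rule triple_sum_by_type) simp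
  finally show ?thesis .
qed

end

lemma edge_rel_insert:
  "e < length (edges G) \<Longrightarrow> edge_rel G (insert e A)
     = edge_rel G A \<union> {(fst (edges G ! e), snd (edges G ! e)), (snd (edges G ! e), fst (edges G ! e))}"
  by (auto simp: edge_rel_def)

lemma conn_insert_iff:
  assumes "e < length (edges G)"
  shows "(a,b) \<in> conn G (insert e A) \<longleftrightarrow> (a,b) \<in> conn G A
     \<or> ((a, fst (edges G ! e)) \<in> conn G A \<and> (snd (edges G ! e), b) \<in> conn G A)
     \<or> ((a, snd (edges G ! e)) \<in> conn G A \<and> (fst (edges G ! e), b) \<in> conn G A)"
  unfolding conn_def edge_rel_insert[OF assms] rtrancl_Un_sym_pair[OF sym_edge_rel] by simp

lemma ncomp_insert:
  assumes "e < length (edges G)" "finite (verts G)" "fst (edges G ! e) \<in> verts G" "snd (edges G ! e) \<in> verts G"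
  shows "ncomp G (insert e A) = ncomp G A - (if (fst (edges G ! e), snd (edges G ! e)) \<in> conn G A then 0 else 1)"
  unfolding ncomp_def conn_def edge_rel_insert[OF assms(1)]
  by (rule card_classes_Un_sym_pair[OF sym_edge_rel assms(2-4)])

lemma ncomp_empty: "ncomp G {} = card (verts G)"
proof -
  have "conn G {} `` {v} = {v}" for v by (auto simp: conn_def edge_rel_def)
  then show ?thesis by (simp add: ncomp_def card_image inj_on_def)
qed

lemma well_formed_triangle: "well_formed triangle"
  by (auto simp: well_formed_def triangle_def less_Suc_eq numeral_3_eq_3)

lemma triangle_simps:
  "length (edges triangle) = 3" "verts triangle = {0,1,2}" "topv triangle = 0" "leftv triangle = 1"
  "rightv triangle = 2" "edges triangle ! 0 = (0,1)" "edges triangle ! Suc 0 = (0,2)"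
  "edges triangle ! 2 = (1,2)"
  by (simp_all add: triangle_def)

lemma type_sums_triangle:
  "type_sum triangle Joined = 2" "type_sum triangle TopAlone = 1" "type_sum triangle LeftAlone = 1"
  "type_sum triangle RightAlone = 1" "type_sum triangle Apart = 1"
proof -
  have ids: "edge_ids triangle = {0,1,2}" by (auto simp: edge_ids_def triangle_simps)
  have sum_type: "type_sum triangle \<tau>
      = (\<Sum>A\<in>Pow {0,1,2}. if terminal_type triangle A = \<tau> then (-1::real) ^ nul triangle A else 0)" for \<tau>
    unfolding type_sum_def ids by (rule sum.inter_filter) simp
  have fin: "finite (verts triangle)" by (simp add: triangle_simps)
  have conn_ins: "(a,b) \<in> conn triangle (insert e A) \<longleftrightarrow> (a,b) \<in> conn triangle A
     \<or> ((a, fst (edges triangle ! e)) \<in> conn triangle A \<and> (snd (edges triangle ! e), b) \<in> conn triangle A)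
     \<or> ((a, snd (edges triangle ! e)) \<in> conn triangle A \<and> (fst (edges triangle ! e), b) \<in> conn triangle A)"
    if "e \<in> {0,1,2}" for e a b A
    using conn_insert_iff[of e triangle] that by (auto simp: triangle_simps)
  have ncomp_ins: "ncomp triangle (insert e A) = ncomp triangle A
      - (if (fst (edges triangle ! e), snd (edges triangle ! e)) \<in> conn triangle A then 0 else 1)"
    if "e \<in> {0,1,2}" for e A
    using that by (intro ncomp_insert[OF _ fin]) (auto simp: triangle_simps)
  have conn_empty: "(a,b) \<in> conn triangle {} \<longleftrightarrow> a = b" for a b
    by (simp add: conn_def edge_rel_def)
  have nul_triangle: "nul triangle A = card A - (3 - ncomp triangle A)" for A
    by (simp add: nul_def rk_def triangle_simps)
  have subsets: "(\<Sum>A\<in>Pow {0,1,2::nat}. F A)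
      = F {} + F {2} + F {1} + F {1,2} + F {0} + F {0,2} + F {0,1} + F {0,1,2}" for F :: "nat set \<Rightarrow> real"
    by (simp add: sum_Pow_insert)
  show "type_sum triangle Joined = 2" "type_sum triangle TopAlone = 1" "type_sum triangle LeftAlone = 1"
    "type_sum triangle RightAlone = 1" "type_sum triangle Apart = 1"
    unfolding sum_type subsets nul_triangle terminal_type_def
    by (simp_all add: conn_ins ncomp_ins ncomp_empty conn_empty triangle_simps tpart_of_def)
qed

lemma gamma_aux_invariant:
  "well_formed (gamma_aux k) \<and> type_sum (gamma_aux k) LeftAlone = type_sum (gamma_aux k) TopAlone
     \<and> type_sum (gamma_aux k) RightAlone = type_sum (gamma_aux k) TopAlone"
proof (induction k)
  case 0
  then show ?case using well_formed_triangle type_sums_triangle by simp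
next
  case (Suc k)
  then interpret sierpinski_step "gamma_aux k" by unfold_locales simp
  show ?case
    using Suc.IH well_formed_H type_sum_H glue_sums_values(3,4) by simp
qed

theorem proposition3p9:
  fixes n :: nat
  assumes "n \<ge> 1"
  shows "real (card (acyclic_orientations (Gamma n))) = tutte (Gamma n) 2 0
    \<and> tutte (Gamma n) 2 0 = tutte2 (Gamma n) 2 0 + 3 * NN (Gamma n) 2 0 + MM (Gamma n) 2 0
    \<and> tutte (Gamma (n+1)) 2 0 = (tutte (Gamma n) 2 0) ^ 3
          - 2 * (tutte2 (Gamma n) 2 0 + NN (Gamma n) 2 0) ^ 3
    \<and> (let a = tutte2 (Gamma n) 2 0; b = NN (Gamma n) 2 0; c = MM (Gamma n) 2 0 in
        tutte2 (Gamma (n+1)) 2 0 = - (a^3) + 6*a^2*b + 3*a*b^2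
      \<and> NN (Gamma (n+1)) 2 0 = - (a^2*b) + a^2*c + 7*a*b^2 + 2*a*b*c + 4*b^3 + b^2*c
      \<and> MM (Gamma (n+1)) 2 0 = - (3*a*b^2) + 12*a*b*c + 3*a*c^2 + 13*b^3 + 24*b^2*c
                                + 9*b*c^2 + c^3)
    \<and> tutte2 (Gamma 1) 2 0 = 2 \<and> NN (Gamma 1) 2 0 = 1 \<and> MM (Gamma 1) 2 0 = 1"
proof -
  have inv: "well_formed (Gamma n)" "type_sum (Gamma n) LeftAlone = type_sum (Gamma n) TopAlone"
    "type_sum (Gamma n) RightAlone = type_sum (Gamma n) TopAlone"
    using gamma_aux_invariant[of "n - 1"] by (simp_all add: Gamma_def)
  interpret sierpinski_step "Gamma n" by unfold_locales (rule inv(1))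
  have step: "Gamma (n + 1) = sier_step (Gamma n)" using assms by (cases n) (simp_all add: Gamma_def)
  have base: "Gamma 1 = triangle" by (simp add: Gamma_def)
  note next_sums = type_sum_H[folded step] glue_sums_values[OF inv(2,3)]
  show ?thesis
    unfolding Let_def type_sums tutte_type_sums next_sums inv(2,3) base type_sums_triangle
    using card_acyclic_orientations[OF inv(1)]
    by (simp add: tutte_type_sums inv(2,3) algebra_simps power2_eq_square power3_eq_cube)
qed

end
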